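(* For $n\in\mathbb Z$ let $A_n=\{a\in A:\rho^{\mathbb K}_\theta(a)=e^{in\theta}a\ \forall\theta\}$ and $B_n=\{b\in B:\rho^{\mathbb L}_\theta(b)=e^{in\theta}b\ \forall\theta\}$. Then $A_n=\{U^n(\alpha(\mathbb{K})+M^+_f):\alpha\in c_0(\mathbb{Z}_{\ge0}),f\in C(G)\}$ for $n\ge0$, and $A_n=\{(\alpha(\mathbb{K})+M^+_f)(U^* )^{-n}:\alpha\in c_0(\mathbb{Z}_{\ge0}),f\in C(G)\}$ for $n<0$; and $B_n=\{V^nM_f: f\in C(G)\}$ for $n\ge0$, $B_n=\{M_fV^n:f\in C(G)\}$ for $n<0$.
   Context: Setup: $G$ is an infinite compact (Hausdorff) abelian group, written additively, and $x_1\in G$ generates a dense cyclic subgroup; $x_n=nx_1$. $H=\ell^2(\mathbb{Z})$ with basis $\{E_l\}$, $H_+=\ell^2(\mathbb{Z}_{\ge0})$ with basis $\{E^+_k\}$; $VE_l=E_{l+1}$, $UE_k^+=E_{k+1}^+$, $M_fE_l=f(x_l)E_l$, $M^+_fE^+_k=f(x_k)E^+_k$, $\mathbb{K}E_k^+=kE_k^+$, $\mathbb{L}E_l=lE_l$, and $\alpha(\mathbb{K})E_k^+=\alpha(k)E_k^+$ for a bounded sequence $\alpha$. $A=C^*(U,M^+_f:f\in C(G))$, $B=C^*(V,M_f:f\in C(G))$. $\rho^{\mathbb K}_\theta(a)=e^{i\theta\mathbb{K}}ae^{-i\theta\mathbb{K}}$ and $\rho^{\mathbb L}_\theta(b)=e^{i\theta\mathbb{L}}be^{-i\theta\mathbb{L}}$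 for $\theta\in\mathbb R$ (these preserve $A$ and $B$ respectively). *)

theory Defs
  imports "HOL-Analysis.Analysis"
begin

text \<open>Bounded operators on l2(I) (I = int or nat) are represented by their matrices
  m i j = <E_i, T E_j>.  Everything below is expressed on matrices.\<close>

type_synonym 'i mat = "'i \<Rightarrow> 'i \<Rightarrow> complex"

definition bilin_vals :: "'i mat \<Rightarrow> real set" where
  "bilin_vals m = {cmod (\<Sum>i\<in>F. \<Sum>j\<in>F. cnj (y i) * m i j * x j) | F x y.
      finite F \<and> (\<Sum>j\<in>F. (cmod (x j))\<^sup>2) \<le> 1 \<and> (\<Sum>i\<in>F. (cmod (y i))\<^sup>2) \<le> 1}"

definition bounded_mat :: "'i mat \<Rightarrow> bool" where
  "bounded_mat m \<longleftrightarrow> bdd_above (bilin_vals m)"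

definition opnorm :: "'i mat \<Rightarrow> real" where
  "opnorm m = Sup (bilin_vals m)"

definition mat_add :: "'i mat \<Rightarrow> 'i mat \<Rightarrow> 'i mat" where
  "mat_add a b = (\<lambda>i j. a i j + b i j)"

definition mat_scale :: "complex \<Rightarrow> 'i mat \<Rightarrow> 'i mat" where
  "mat_scale c a = (\<lambda>i j. c * a i j)"

definition mat_mult :: "'i mat \<Rightarrow> 'i mat \<Rightarrow> 'i mat" where
  "mat_mult a b = (\<lambda>i j. infsum (\<lambda>k. a i k * b k j) UNIV)"

definition mat_adj :: "'i mat \<Rightarrow> 'i mat" where
  "mat_adj a = (\<lambda>i j. cnj (a j i))"

definition diag_mat :: "('i \<Rightarrow> complex) \<Rightarrow> 'i mat" where
  "diag_mat d = (\<lambda>i j. if i = j then d i else 0)"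

definition mat_id :: "'i mat" where
  "mat_id = diag_mat (\<lambda>_. 1)"

primrec mat_pow :: "'i mat \<Rightarrow> nat \<Rightarrow> 'i mat" where
  "mat_pow m 0 = mat_id"
| "mat_pow m (Suc n) = mat_mult m (mat_pow m n)"

inductive_set cstar_gen :: "'i mat set \<Rightarrow> 'i mat set" for S where
  gen: "a \<in> S \<Longrightarrow> a \<in> cstar_gen S"
| add: "a \<in> cstar_gen S \<Longrightarrow> b \<in> cstar_gen S \<Longrightarrow> mat_add a b \<in> cstar_gen S"
| scale: "a \<in> cstar_gen S \<Longrightarrow> mat_scale c a \<in> cstar_gen S"
| mult: "a \<in> cstar_gen S \<Longrightarrow> b \<in> cstar_gen S \<Longrightarrow> mat_mult a b \<in> cstar_gen S"
| adj: "a \<in> cstar_gen S \<Longrightarrow> mat_adj a \<in> cstar_gen S"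
| lim: "(\<And>k. s k \<in> cstar_gen S) \<Longrightarrow> bounded_mat m \<Longrightarrow>
        (\<lambda>k. opnorm (\<lambda>i j. s k i j - m i j)) \<longlonglongrightarrow> 0 \<Longrightarrow> m \<in> cstar_gen S"

definition intmul :: "int \<Rightarrow> 'a::ab_group_add \<Rightarrow> 'a" where
  "intmul n x = (if n \<ge> 0 then (\<Sum>i<nat n. x) else - (\<Sum>i<nat (-n). x))"

definition shiftV :: "int mat" where
  "shiftV = (\<lambda>i j. if i = j + 1 then 1 else 0)"

definition shiftU :: "nat mat" where
  "shiftU = (\<lambda>i j. if i = j + 1 then 1 else 0)"

definition multM :: "'g::ab_group_add \<Rightarrow> ('g \<Rightarrow> complex) \<Rightarrow> int mat" where
  "multM x1 f = diag_mat (\<lambda>l. f (intmul l x1))"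

definition multMp :: "'g::ab_group_add \<Rightarrow> ('g \<Rightarrow> complex) \<Rightarrow> nat mat" where
  "multMp x1 f = diag_mat (\<lambda>k. f (intmul (int k) x1))"

definition alg_A :: "'g::{topological_ab_group_add} \<Rightarrow> nat mat set" where
  "alg_A x1 = cstar_gen (insert shiftU {multMp x1 f | f. continuous_on UNIV f})"

definition alg_B :: "'g::{topological_ab_group_add} \<Rightarrow> int mat set" where
  "alg_B x1 = cstar_gen (insert shiftV {multM x1 f | f. continuous_on UNIV f})"

text \<open>Gauge actions rho_theta(a) = e^{i theta K} a e^{-i theta K} (resp. with L).\<close>

definition rhoK :: "real \<Rightarrow> nat mat \<Rightarrow> nat mat" where
  "rhoK \<theta> a = mat_mult (mat_mult (diag_mat (\<lambda>k. cis (\<theta> * real k))) a)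
                        (diag_mat (\<lambda>k. cis (- \<theta> * real k)))"

definition rhoL :: "real \<Rightarrow> int mat \<Rightarrow> int mat" where
  "rhoL \<theta> b = mat_mult (mat_mult (diag_mat (\<lambda>l. cis (\<theta> * real_of_int l))) b)
                        (diag_mat (\<lambda>l. cis (- \<theta> * real_of_int l)))"

definition spectral_A :: "'g::{topological_ab_group_add} \<Rightarrow> int \<Rightarrow> nat mat set" where
  "spectral_A x1 n = {a \<in> alg_A x1. \<forall>\<theta>::real. rhoK \<theta> a = mat_scale (cis (real_of_int n * \<theta>)) a}"

definition spectral_B :: "'g::{topological_ab_group_add} \<Rightarrow> int \<Rightarrow> int mat set" where
  "spectral_B x1 n = {b \<in> alg_B x1. \<forall>\<theta>::real. rhoL \<theta> b = mat_scale (cis (real_of_int n * \<theta>)) b}"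

end

theory Submission
  imports Defs
begin

text \<open>A matrix is an eigenvector of the gauge action with character \<open>e^(i n \<theta>)\<close> exactly
  when it is supported on the diagonal \<open>i - j = n\<close>, i.e. when it is a power of the shift times
  a diagonal matrix; so everything reduces to identifying which diagonal sequences occur.
  The generators of \<open>B\<close> are banded matrices whose diagonals are samples \<open>k \<mapsto> g(k x\<^sub>1)\<close>
  of continuous functions \<open>g\<close> on \<open>G\<close>. This survives the *-algebra operations and also
  operator-norm limits: entries are bounded by the norm, and since the orbit is dense the
  sup-norm of \<open>g\<close> is controlled by its samples. For \<open>A\<close>, extended by zero to \<open>\<int>\<close>, the same
  holds with samples taken only as \<open>k \<rightarrow> \<infinity>\<close>; compactness makes every tail of the orbit
  dense, so a diagonal of an element of \<open>A\<close> is \<open>g(x\<^sub>k)\<close> up to a null sequence. Conversely,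
  diagonal matrices with null entries lie in \<open>A\<close> as norm limits of finite combinations of
  the projections \<open>U\<^sup>k (1 - U U\<^sup>*) U\<^sup>*\<^sup>k\<close>.\<close>

section \<open>Operator norm of matrices\<close>

abbreviation bilin_abs :: "'i mat \<Rightarrow> 'i set \<Rightarrow> ('i \<Rightarrow> complex) \<Rightarrow> ('i \<Rightarrow> complex) \<Rightarrow> real" where
  "bilin_abs m F x y \<equiv> cmod (\<Sum>i\<in>F. \<Sum>j\<in>F. cnj (y i) * m i j * x j)"

abbreviation sq_norm_on :: "'i set \<Rightarrow> ('i \<Rightarrow> complex) \<Rightarrow> real" where
  "sq_norm_on F x \<equiv> (\<Sum>j\<in>F. (cmod (x j))\<^sup>2)"

lemma zero_in_bilin_vals: "0 \<in> bilin_vals m"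
  unfolding bilin_vals_def by (rule CollectI, rule exI[of _ "{}"]) auto

lemma bilin_abs_le_opnorm:
  assumes "bounded_mat m" "finite F" "sq_norm_on F x \<le> 1" "sq_norm_on F y \<le> 1"
  shows "bilin_abs m F x y \<le> opnorm m"
  unfolding opnorm_def
  by (rule cSup_upper) (use assms in \<open>auto simp: bilin_vals_def bounded_mat_def\<close>)

lemma opnorm_nonneg: "bounded_mat m \<Longrightarrow> 0 \<le> opnorm m"
  unfolding opnorm_def using zero_in_bilin_vals by (rule cSup_upper2) (auto simp: bounded_mat_def)

lemma opnorm_le_bilin_bound:
  assumes "\<And>F x y. finite F \<Longrightarrow> sq_norm_on F x \<le> 1 \<Longrightarrow> sq_norm_on F y \<le> 1 \<Longrightarrow> bilin_abs m F x y \<le> C"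
  shows "bounded_mat m" "opnorm m \<le> C"
proof -
  have *: "\<And>v. v \<in> bilin_vals m \<Longrightarrow> v \<le> C" using assms unfolding bilin_vals_def by blast
  show "bounded_mat m" unfolding bounded_mat_def bdd_above_def using * by blast
  show "opnorm m \<le> C" unfolding opnorm_def using zero_in_bilin_vals * by (intro cSup_least) auto
qed

lemma norm_entry_le_opnorm:
  assumes "bounded_mat m"
  shows "cmod (m i j) \<le> opnorm m"
proof -
  let ?x = "\<lambda>k. if k = j then (1::complex) else 0"
  let ?y = "\<lambda>k. if k = i then (1::complex) else 0"
  have unit: "sq_norm_on {i,j} ?x \<le> 1" "sq_norm_on {i,j} ?y \<le> 1"
    by (cases "i = j"; simp)+
  have "bilin_abs m {i,j} ?x ?y = cmod (m i j)"
    by (cases "i = j") (simp_all add: if_distrib sum.If_cases cong: if_cong)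
  with bilin_abs_le_opnorm[OF assms _ unit] show ?thesis by simp
qed

lemma opnorm_add:
  assumes "bounded_mat a" "bounded_mat b"
  shows "bounded_mat (mat_add a b)" "opnorm (mat_add a b) \<le> opnorm a + opnorm b"
proof -
  have "\<And>F x y. finite F \<Longrightarrow> sq_norm_on F x \<le> 1 \<Longrightarrow> sq_norm_on F y \<le> 1 \<Longrightarrow>
      bilin_abs (mat_add a b) F x y \<le> opnorm a + opnorm b"
  proof -
    fix F and x y :: "'a \<Rightarrow> complex"
    assume that: "finite F" "sq_norm_on F x \<le> 1" "sq_norm_on F y \<le> 1"
    have "(\<Sum>i\<in>F. \<Sum>j\<in>F. cnj (y i) * mat_add a b i j * x j) =
          (\<Sum>i\<in>F. \<Sum>j\<in>F. cnj (y i) * a i j * x j) + (\<Sum>i\<in>F. \<Sum>j\<in>F. cnj (y i) * b i j * x j)"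
      by (simp add: mat_add_def algebra_simps sum.distrib)
    then have "bilin_abs (mat_add a b) F x y \<le> bilin_abs a F x y + bilin_abs b F x y"
      by (simp add: norm_triangle_ineq)
    then show "bilin_abs (mat_add a b) F x y \<le> opnorm a + opnorm b"
      using bilin_abs_le_opnorm[OF assms(1) that] bilin_abs_le_opnorm[OF assms(2) that] by linarith
  qed
  from opnorm_le_bilin_bound[OF this]
  show "bounded_mat (mat_add a b)" "opnorm (mat_add a b) \<le> opnorm a + opnorm b" by auto
qed

lemma opnorm_scale:
  assumes "bounded_mat a"
  shows "bounded_mat (mat_scale c a)" "opnorm (mat_scale c a) \<le> cmod c * opnorm a"
proof -
  have "\<And>F x y. finite F \<Longrightarrow> sq_norm_on F x \<le> 1 \<Longrightarrow> sq_norm_on F y \<le> 1 \<Longrightarrow>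
      bilin_abs (mat_scale c a) F x y \<le> cmod c * opnorm a"
  proof -
    fix F and x y :: "'a \<Rightarrow> complex"
    assume that: "finite F" "sq_norm_on F x \<le> 1" "sq_norm_on F y \<le> 1"
    have "(\<Sum>i\<in>F. \<Sum>j\<in>F. cnj (y i) * mat_scale c a i j * x j) = c * (\<Sum>i\<in>F. \<Sum>j\<in>F. cnj (y i) * a i j * x j)"
      by (simp add: mat_scale_def sum_distrib_left algebra_simps)
    then show "bilin_abs (mat_scale c a) F x y \<le> cmod c * opnorm a"
      using bilin_abs_le_opnorm[OF assms that] by (simp add: norm_mult mult_left_mono)
  qed
  from opnorm_le_bilin_bound[OF this]
  show "bounded_mat (mat_scale c a)" "opnorm (mat_scale c a) \<le> cmod c * opnorm a" by auto
qed

lemma bilin_abs_adj: "bilin_abs (mat_adj a) F x y = bilin_abs a F y x"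
proof -
  have "(\<Sum>i\<in>F. \<Sum>j\<in>F. cnj (y i) * mat_adj a i j * x j) = (\<Sum>i\<in>F. \<Sum>j\<in>F. cnj (cnj (x j) * a j i * y i))"
    by (simp add: mat_adj_def mult_ac)
  also have "\<dots> = cnj (\<Sum>j\<in>F. \<Sum>i\<in>F. cnj (x j) * a j i * y i)"
    by (subst sum.swap) (simp only: cnj_sum)
  finally show ?thesis by (simp only: complex_mod_cnj)
qed

lemma opnorm_adj:
  assumes "bounded_mat a"
  shows "bounded_mat (mat_adj a)" "opnorm (mat_adj a) \<le> opnorm a"
proof -
  have "\<And>F x y. finite F \<Longrightarrow> sq_norm_on F x \<le> 1 \<Longrightarrow> sq_norm_on F y \<le> 1 \<Longrightarrow>
      bilin_abs (mat_adj a) F x y \<le> opnorm a"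
    using bilin_abs_le_opnorm[OF assms] by (simp add: bilin_abs_adj)
  from opnorm_le_bilin_bound[OF this]
  show "bounded_mat (mat_adj a)" "opnorm (mat_adj a) \<le> opnorm a" by auto
qed

lemma sum_if_mem_subset:
  assumes "finite H" "S \<subseteq> H"
  shows "(\<Sum>k\<in>H. if k \<in> S then f k else 0) = sum f S"
  using sum.inter_restrict[OF assms(1), of f S] Int_absorb1[OF assms(2)] by simp

lemma sum_norm_mult_le:
  fixes u v :: "'a \<Rightarrow> 'b::real_normed_div_algebra"
  assumes "(\<Sum>k\<in>G. (norm (u k))\<^sup>2) \<le> A\<^sup>2" "(\<Sum>k\<in>G. (norm (v k))\<^sup>2) \<le> B\<^sup>2" "A \<ge> 0" "B \<ge> 0"
  shows "(\<Sum>k\<in>G. norm (u k * v k)) \<le> A * B"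
proof -
  have "(\<Sum>k\<in>G. norm (u k * v k)) = (\<Sum>k\<in>G. \<bar>norm (u k)\<bar> * \<bar>norm (v k)\<bar>)" by (simp add: norm_mult)
  also have "\<dots> \<le> sqrt (\<Sum>k\<in>G. (norm (u k))\<^sup>2) * sqrt (\<Sum>k\<in>G. (norm (v k))\<^sup>2)"
    using L2_set_mult_ineq[of "\<lambda>k. norm (u k)" "\<lambda>k. norm (v k)" G] by (simp add: L2_set_def)
  also have "\<dots> \<le> sqrt (A\<^sup>2) * sqrt (B\<^sup>2)"
    using assms by (intro mult_mono real_sqrt_le_mono) (auto simp: sum_nonneg)
  finally show ?thesis using assms by simp
qed

lemma bilin_sum_le_opnorm:
  assumes m: "bounded_mat m" and "finite F" "finite G"
    and x: "sq_norm_on F x \<le> 1" and y: "sq_norm_on G y \<le> 1"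
  shows "cmod (\<Sum>i\<in>G. \<Sum>j\<in>F. cnj (y i) * m i j * x j) \<le> opnorm m"
proof -
  define H where "H = F \<union> G"
  define x' where "x' k = (if k \<in> F then x k else 0)" for k
  define y' where "y' k = (if k \<in> G then y k else 0)" for k
  have H: "finite H" "F \<subseteq> H" "G \<subseteq> H" using assms(2,3) by (auto simp: H_def)
  have "(\<Sum>i\<in>H. \<Sum>j\<in>H. cnj (y' i) * m i j * x' j) = (\<Sum>i\<in>H. \<Sum>j\<in>F. cnj (y' i) * m i j * x j)"
    by (rule sum.cong[OF refl], subst sum.mono_neutral_right[OF H(1,2)]) (auto simp: x'_def)
  also have "\<dots> = (\<Sum>i\<in>G. \<Sum>j\<in>F. cnj (y i) * m i j * x j)"
    by (subst sum.mono_neutral_right[OF H(1,3)]) (auto simp: y'_def)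
  moreover have "sq_norm_on H x' = sq_norm_on F x"
    by (subst sum.mono_neutral_right[OF H(1,2)]) (auto simp: x'_def)
  moreover have "sq_norm_on H y' = sq_norm_on G y"
    by (subst sum.mono_neutral_right[OF H(1,3)]) (auto simp: y'_def)
  ultimately show ?thesis using bilin_abs_le_opnorm[OF m H(1), of x' y'] x y by simp
qed

text \<open>Test the bilinear form against \<open>y = m x\<close> restricted to \<open>G\<close> and normalised.\<close>

lemma sum_sq_mat_vec_le:
  assumes m: "bounded_mat m" and F: "finite F" and G: "finite G" and x: "sq_norm_on F x \<le> 1"
  shows "(\<Sum>k\<in>G. (cmod (\<Sum>j\<in>F. m k j * x j))\<^sup>2) \<le> (opnorm m)\<^sup>2"
proof -
  define v where "v k = (\<Sum>j\<in>F. m k j * x j)" for k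
  define r where "r = sqrt (\<Sum>k\<in>G. (cmod (v k))\<^sup>2)"
  have r0: "r \<ge> 0" and rsq: "r\<^sup>2 = (\<Sum>k\<in>G. (cmod (v k))\<^sup>2)"
    unfolding r_def by (simp_all add: sum_nonneg)
  have "r \<le> opnorm m"
  proof (cases "r = 0")
    case True then show ?thesis using opnorm_nonneg[OF m] by simp
  next
    case False
    define y where "y k = v k / of_real r" for k
    have "sq_norm_on G y = 1"
      using False r0 by (simp add: y_def norm_divide power_divide sum_divide_distrib[symmetric] rsq[symmetric])
    have "(\<Sum>i\<in>G. \<Sum>j\<in>F. cnj (y i) * m i j * x j) = (\<Sum>i\<in>G. cnj (y i) * v i)"
      by (simp add: v_def sum_distrib_left mult.assoc)
    also have "\<dots> = (\<Sum>i\<in>G. of_real ((cmod (v i))\<^sup>2 / r))"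
      by (intro sum.cong) (auto simp: y_def complex_norm_square[symmetric] field_simps)
    also have "\<dots> = of_real (r\<^sup>2 / r)" by (simp add: rsq sum_divide_distrib)
    also have "\<dots> = of_real r" by (simp add: power2_eq_square)
    finally have "cmod (\<Sum>i\<in>G. \<Sum>j\<in>F. cnj (y i) * m i j * x j) = r" using r0 by simp
    then show ?thesis using bilin_sum_le_opnorm[OF m F G x, of y] \<open>sq_norm_on G y = 1\<close> by simp
  qed
  then have "r\<^sup>2 \<le> (opnorm m)\<^sup>2" using r0 by (simp add: power_mono)
  then show ?thesis using rsq by (simp add: v_def)
qed

lemma column_sq_le:
  assumes "bounded_mat m" "finite G"
  shows "(\<Sum>k\<in>G. (cmod (m k j))\<^sup>2) \<le> (opnorm m)\<^sup>2"
  using sum_sq_mat_vec_le[OF assms(1) _ assms(2), of "{j}" "\<lambda>_. 1"] by simp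

lemma row_sq_le:
  assumes m: "bounded_mat m" and G: "finite G"
  shows "(\<Sum>k\<in>G. (cmod (m i k))\<^sup>2) \<le> (opnorm m)\<^sup>2"
proof -
  have "(\<Sum>k\<in>G. (cmod (m i k))\<^sup>2) = (\<Sum>k\<in>G. (cmod (mat_adj m k i))\<^sup>2)" by (simp add: mat_adj_def)
  also have "\<dots> \<le> (opnorm (mat_adj m))\<^sup>2" by (rule column_sq_le[OF opnorm_adj(1)[OF m] G])
  also have "\<dots> \<le> (opnorm m)\<^sup>2"
    using opnorm_adj[OF m] opnorm_nonneg[OF opnorm_adj(1)[OF m]] by (simp add: power_mono)
  finally show ?thesis .
qed

lemma bounded_finite_sums_summable_on:
  fixes f :: "'a \<Rightarrow> complex"
  assumes "\<And>G. finite G \<Longrightarrow> (\<Sum>k\<in>G. norm (f k)) \<le> C"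
  shows "f summable_on UNIV" "norm (infsum f UNIV) \<le> C"
proof -
  have as: "(\<lambda>x. norm (f x)) summable_on UNIV"
    by (rule nonneg_bdd_above_summable_on) (use assms in \<open>auto simp: bdd_above_def\<close>)
  then show "f summable_on UNIV" by (rule abs_summable_summable)
  have "norm (infsum f UNIV) \<le> infsum (\<lambda>x. norm (f x)) UNIV" by (rule norm_infsum_bound[OF as])
  also have "\<dots> \<le> C" by (rule infsum_le_finite_sums[OF as]) (use assms in auto)
  finally show "norm (infsum f UNIV) \<le> C" .
qed

lemma mat_mult_summable:
  assumes a: "bounded_mat a" and b: "bounded_mat b"
  shows "(\<lambda>k. a i k * b k j) summable_on UNIV"
  using sum_norm_mult_le[OF row_sq_le[OF a] column_sq_le[OF b] opnorm_nonneg[OF a] opnorm_nonneg[OF b]]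
  by (rule bounded_finite_sums_summable_on(1))

lemma summable_on_sum_fun:
  fixes f :: "'a \<Rightarrow> 'b \<Rightarrow> complex"
  assumes "finite F" "\<And>i. i \<in> F \<Longrightarrow> f i summable_on A"
  shows "(\<lambda>k. \<Sum>i\<in>F. f i k) summable_on A"
  using assms by (induction F rule: finite_induct) (simp_all add: summable_on_add)

lemma infsum_sum_fun:
  fixes f :: "'a \<Rightarrow> 'b \<Rightarrow> complex"
  assumes "finite F" "\<And>i. i \<in> F \<Longrightarrow> f i summable_on A"
  shows "infsum (\<lambda>k. \<Sum>i\<in>F. f i k) A = (\<Sum>i\<in>F. infsum (f i) A)"
  using assms by (induction F rule: finite_induct) (simp_all add: infsum_add summable_on_sum_fun)

lemma opnorm_mult:
  assumes a: "bounded_mat a" and b: "bounded_mat b"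
  shows "bounded_mat (mat_mult a b)" "opnorm (mat_mult a b) \<le> opnorm a * opnorm b"
proof -
  have "\<And>F x y. finite F \<Longrightarrow> sq_norm_on F x \<le> 1 \<Longrightarrow> sq_norm_on F y \<le> 1 \<Longrightarrow>
      bilin_abs (mat_mult a b) F x y \<le> opnorm a * opnorm b"
  proof -
    fix F and x y :: "'a \<Rightarrow> complex"
    assume F: "finite F" and x: "sq_norm_on F x \<le> 1" and y: "sq_norm_on F y \<le> 1"
    define u where "u k = (\<Sum>i\<in>F. cnj (y i) * a i k)" for k
    define v where "v k = (\<Sum>j\<in>F. b k j * x j)" for k
    have sm: "(\<lambda>k. cnj (y i) * (a i k * b k j) * x j) summable_on UNIV" for i j
      using mat_mult_summable[OF a b] summable_on_cmult_right summable_on_cmult_left by blast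
    have "cnj (y i) * mat_mult a b i j * x j = infsum (\<lambda>k. cnj (y i) * (a i k * b k j) * x j) UNIV" for i j
      by (simp add: mat_mult_def infsum_cmult_left' infsum_cmult_right')
    then have "(\<Sum>i\<in>F. \<Sum>j\<in>F. cnj (y i) * mat_mult a b i j * x j) =
          infsum (\<lambda>k. \<Sum>i\<in>F. \<Sum>j\<in>F. cnj (y i) * (a i k * b k j) * x j) UNIV"
      using F sm by (simp add: infsum_sum_fun summable_on_sum_fun)
    also have "\<dots> = infsum (\<lambda>k. u k * v k) UNIV"
      by (rule infsum_cong) (simp only: u_def v_def sum_product, simp add: mult_ac)
    finally have eq: "(\<Sum>i\<in>F. \<Sum>j\<in>F. cnj (y i) * mat_mult a b i j * x j) = infsum (\<lambda>k. u k * v k) UNIV" .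
    have "norm (infsum (\<lambda>k. u k * v k) UNIV) \<le> opnorm a * opnorm b"
    proof (rule bounded_finite_sums_summable_on(2))
      fix G :: "'a set" assume G: "finite G"
      have "u k = cnj (\<Sum>i\<in>F. mat_adj a k i * y i)" for k
        by (simp add: u_def mat_adj_def mult.commute)
      then have "(\<Sum>k\<in>G. (cmod (u k))\<^sup>2) \<le> (opnorm (mat_adj a))\<^sup>2"
        using sum_sq_mat_vec_le[OF opnorm_adj(1)[OF a] F G y] by (simp only: complex_mod_cnj)
      also have "\<dots> \<le> (opnorm a)\<^sup>2"
        using opnorm_adj[OF a] opnorm_nonneg[OF opnorm_adj(1)[OF a]] by (simp add: power_mono)
      finally show "(\<Sum>k\<in>G. norm (u k * v k)) \<le> opnorm a * opnorm b"
        using sum_sq_mat_vec_le[OF b F G x] opnorm_nonneg[OF a] opnorm_nonneg[OF b]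
        unfolding v_def by (intro sum_norm_mult_le) auto
    qed
    with eq show "bilin_abs (mat_mult a b) F x y \<le> opnorm a * opnorm b" by simp
  qed
  from opnorm_le_bilin_bound[OF this]
  show "bounded_mat (mat_mult a b)" "opnorm (mat_mult a b) \<le> opnorm a * opnorm b" by auto
qed

section \<open>Norm approximation in generated C*-algebras\<close>

definition mat_diff :: "'i mat \<Rightarrow> 'i mat \<Rightarrow> 'i mat" where
  "mat_diff a b = (\<lambda>i j. a i j - b i j)"

lemma opnorm_diff:
  assumes "bounded_mat a" "bounded_mat b"
  shows "bounded_mat (mat_diff a b)" "opnorm (mat_diff a b) \<le> opnorm a + opnorm b"
proof -
  have eq: "mat_diff a b = mat_add a (mat_scale (-1) b)"
    by (simp add: mat_diff_def mat_add_def mat_scale_def)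
  show "bounded_mat (mat_diff a b)" "opnorm (mat_diff a b) \<le> opnorm a + opnorm b"
    unfolding eq using opnorm_add[OF assms(1) opnorm_scale(1)[OF assms(2)], of "-1"]
      opnorm_scale(2)[OF assms(2), of "-1"]
    by auto
qed

lemma opnorm_diff_commute:
  assumes "bounded_mat a" "bounded_mat b"
  shows "opnorm (mat_diff a b) = opnorm (mat_diff b a)"
proof -
  have "mat_diff b a = mat_scale (-1) (mat_diff a b)" "mat_diff a b = mat_scale (-1) (mat_diff b a)"
    by (auto simp: mat_diff_def mat_scale_def)
  then show ?thesis
    using opnorm_scale(2)[OF opnorm_diff(1)[OF assms], of "-1"]
      opnorm_scale(2)[OF opnorm_diff(1)[OF assms(2,1)], of "-1"]
    by simp
qed

lemma opnorm_diff_triangle: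
  assumes "bounded_mat a" "bounded_mat b" "bounded_mat c"
  shows "opnorm (mat_diff a c) \<le> opnorm (mat_diff a b) + opnorm (mat_diff b c)"
proof -
  have "mat_diff a c = mat_add (mat_diff a b) (mat_diff b c)" by (auto simp: mat_diff_def mat_add_def)
  then show ?thesis using opnorm_add(2)[OF opnorm_diff(1)[OF assms(1,2)] opnorm_diff(1)[OF assms(2,3)]] by simp
qed

lemma opnorm_le_add_diff:
  assumes "bounded_mat a" "bounded_mat b"
  shows "opnorm a \<le> opnorm b + opnorm (mat_diff a b)"
proof -
  have "a = mat_add b (mat_diff a b)" by (auto simp: mat_diff_def mat_add_def)
  then show ?thesis using opnorm_add(2)[OF assms(2) opnorm_diff(1)[OF assms]] by simp
qed

lemma infsum_diff:
  fixes f g :: "'a \<Rightarrow> complex"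
  assumes "f summable_on A" "g summable_on A"
  shows "infsum (\<lambda>x. f x - g x) A = infsum f A - infsum g A"
  using infsum_add[OF assms(1), of "\<lambda>x. - g x"] assms(2) by (simp add: infsum_uminus summable_on_uminus)

lemma mat_diff_mat_mult:
  assumes "bounded_mat a" "bounded_mat a'" "bounded_mat b" "bounded_mat b'"
  shows "mat_diff (mat_mult a b) (mat_mult a' b') = mat_add (mat_mult a (mat_diff b b')) (mat_mult (mat_diff a a') b')"
  using assms
  by (simp add: fun_eq_iff mat_diff_def mat_add_def mat_mult_def right_diff_distrib left_diff_distrib
      infsum_diff mat_mult_summable)

definition norm_approx :: "('i mat \<Rightarrow> bool) \<Rightarrow> 'i mat \<Rightarrow> bool" where
  "norm_approx P m \<longleftrightarrow> bounded_mat m \<and> (\<forall>e>0. \<exists>b. P b \<and> bounded_mat b \<and> opnorm (mat_diff m b) < e)"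

lemma norm_approx_self:
  assumes "bounded_mat m" "P m"
  shows "norm_approx P m"
proof -
  have "mat_diff m m = diag_mat (\<lambda>_. 0)" by (simp add: mat_diff_def diag_mat_def fun_eq_iff)
  moreover have "opnorm (diag_mat (\<lambda>_. 0 :: complex) :: 'i mat) \<le> 0"
    by (rule opnorm_le_bilin_bound(2)) (simp add: diag_mat_def)
  ultimately show ?thesis using assms unfolding norm_approx_def by (metis order_le_less_trans)
qed

lemma norm_approx_add:
  assumes a: "norm_approx P a" and b: "norm_approx P b" and P: "\<And>a b. P a \<Longrightarrow> P b \<Longrightarrow> P (mat_add a b)"
  shows "norm_approx P (mat_add a b)"
  unfolding norm_approx_def
proof (intro conjI allI impI)
  have ba: "bounded_mat a" and bb: "bounded_mat b" using a b by (auto simp: norm_approx_def)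
  then show "bounded_mat (mat_add a b)" by (rule opnorm_add(1))
  fix e :: real assume e: "e > 0"
  obtain a' where a': "P a'" "bounded_mat a'" "opnorm (mat_diff a a') < e/2"
    using a e unfolding norm_approx_def by (meson half_gt_zero)
  obtain b' where b': "P b'" "bounded_mat b'" "opnorm (mat_diff b b') < e/2"
    using b e unfolding norm_approx_def by (meson half_gt_zero)
  have "mat_diff (mat_add a b) (mat_add a' b') = mat_add (mat_diff a a') (mat_diff b b')"
    by (simp add: mat_diff_def mat_add_def fun_eq_iff algebra_simps)
  then have "opnorm (mat_diff (mat_add a b) (mat_add a' b')) < e"
    using opnorm_add(2)[OF opnorm_diff(1)[OF ba a'(2)] opnorm_diff(1)[OF bb b'(2)]] a'(3) b'(3) by simp
  then show "\<exists>c. P c \<and> bounded_mat c \<and> opnorm (mat_diff (mat_add a b) c) < e"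
    using a' b' P opnorm_add(1)[OF a'(2) b'(2)] by blast
qed

lemma norm_approx_scale:
  assumes a: "norm_approx P a" and P: "\<And>a. P a \<Longrightarrow> P (mat_scale c a)"
  shows "norm_approx P (mat_scale c a)"
  unfolding norm_approx_def
proof (intro conjI allI impI)
  have ba: "bounded_mat a" using a by (auto simp: norm_approx_def)
  then show "bounded_mat (mat_scale c a)" by (rule opnorm_scale(1))
  fix e :: real assume e: "e > 0"
  have d: "e / (cmod c + 1) > 0" using e by (simp add: add_nonneg_pos)
  obtain a' where a': "P a'" "bounded_mat a'" "opnorm (mat_diff a a') < e / (cmod c + 1)"
    using a d unfolding norm_approx_def by meson
  have "mat_diff (mat_scale c a) (mat_scale c a') = mat_scale c (mat_diff a a')"
    by (auto simp: mat_diff_def mat_scale_def algebra_simps)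
  then have "opnorm (mat_diff (mat_scale c a) (mat_scale c a')) \<le> cmod c * opnorm (mat_diff a a')"
    using opnorm_scale(2)[OF opnorm_diff(1)[OF ba a'(2)]] by simp
  also have "\<dots> \<le> cmod c * (e / (cmod c + 1))" using a'(3) by (intro mult_left_mono) auto
  also have "\<dots> < e" using e by (simp add: field_simps add_pos_nonneg)
  finally show "\<exists>b. P b \<and> bounded_mat b \<and> opnorm (mat_diff (mat_scale c a) b) < e"
    using a' P opnorm_scale(1)[OF a'(2)] by blast
qed

lemma norm_approx_mult:
  assumes a: "norm_approx P a" and b: "norm_approx P b" and P: "\<And>a b. P a \<Longrightarrow> P b \<Longrightarrow> P (mat_mult a b)"
  shows "norm_approx P (mat_mult a b)"
  unfolding norm_approx_def
proof (intro conjI allI impI)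
  have ba: "bounded_mat a" and bb: "bounded_mat b" using a b by (auto simp: norm_approx_def)
  then show "bounded_mat (mat_mult a b)" by (rule opnorm_mult(1))
  fix e :: real assume e: "e > 0"
  define d where "d = min 1 (e / (opnorm a + opnorm b + 2))"
  have oa: "opnorm a \<ge> 0" and ob: "opnorm b \<ge> 0" using opnorm_nonneg ba bb by auto
  have d0: "d > 0" and d1: "d \<le> 1" and d2: "d \<le> e / (opnorm a + opnorm b + 2)"
    using e oa ob by (auto simp: d_def)
  obtain a' where a': "P a'" "bounded_mat a'" "opnorm (mat_diff a a') < d"
    using a d0 unfolding norm_approx_def by meson
  obtain b' where b': "P b'" "bounded_mat b'" "opnorm (mat_diff b b') < d"
    using b d0 unfolding norm_approx_def by meson
  have da: "bounded_mat (mat_diff a a')" and db: "bounded_mat (mat_diff b b')"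
    using opnorm_diff(1) ba bb a'(2) b'(2) by auto
  have ob': "opnorm b' \<le> opnorm b + d"
    using opnorm_le_add_diff[OF b'(2) bb] opnorm_diff_commute[OF bb b'(2)] b'(3) by linarith
  have "opnorm (mat_diff (mat_mult a b) (mat_mult a' b')) \<le>
        opnorm (mat_mult a (mat_diff b b')) + opnorm (mat_mult (mat_diff a a') b')"
    unfolding mat_diff_mat_mult[OF ba a'(2) bb b'(2)]
    by (rule opnorm_add(2)[OF opnorm_mult(1)[OF ba db] opnorm_mult(1)[OF da b'(2)]])
  also have "\<dots> \<le> opnorm a * opnorm (mat_diff b b') + opnorm (mat_diff a a') * opnorm b'"
    by (intro add_mono opnorm_mult(2) ba db da b'(2))
  also have "\<dots> \<le> opnorm a * d + d * (opnorm b + d)"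
    using a'(3) b'(3) ob' oa opnorm_nonneg[OF da] opnorm_nonneg[OF db] opnorm_nonneg[OF b'(2)]
    by (intro add_mono mult_mono) auto
  also have "\<dots> < d * (opnorm a + opnorm b + 2)"
    using d1 d0 by (simp add: algebra_simps mult_left_mono)
  also have "\<dots> \<le> e" using d2 oa ob by (simp add: field_simps)
  finally show "\<exists>c. P c \<and> bounded_mat c \<and> opnorm (mat_diff (mat_mult a b) c) < e"
    using a' b' P opnorm_mult(1)[OF a'(2) b'(2)] by blast
qed

lemma norm_approx_adj:
  assumes a: "norm_approx P a" and P: "\<And>a. P a \<Longrightarrow> P (mat_adj a)"
  shows "norm_approx P (mat_adj a)"
  unfolding norm_approx_def
proof (intro conjI allI impI)
  have ba: "bounded_mat a" using a by (auto simp: norm_approx_def)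
  then show "bounded_mat (mat_adj a)" by (rule opnorm_adj(1))
  fix e :: real assume e: "e > 0"
  obtain a' where a': "P a'" "bounded_mat a'" "opnorm (mat_diff a a') < e"
    using a e unfolding norm_approx_def by meson
  have "mat_diff (mat_adj a) (mat_adj a') = mat_adj (mat_diff a a')"
    by (auto simp: mat_diff_def mat_adj_def)
  then have "opnorm (mat_diff (mat_adj a) (mat_adj a')) < e"
    using opnorm_adj(2)[OF opnorm_diff(1)[OF ba a'(2)]] a'(3) by simp
  then show "\<exists>b. P b \<and> bounded_mat b \<and> opnorm (mat_diff (mat_adj a) b) < e"
    using a' P opnorm_adj(1)[OF a'(2)] by blast
qed

lemma norm_approx_limit:
  assumes s: "\<And>k. norm_approx P (s k)" and m: "bounded_mat m"
    and lim: "(\<lambda>k. opnorm (mat_diff (s k) m)) \<longlonglongrightarrow> 0"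
  shows "norm_approx P m"
  unfolding norm_approx_def
proof (intro conjI allI impI)
  show "bounded_mat m" by fact
  fix e :: real assume e: "e > 0"
  obtain k where k: "opnorm (mat_diff (s k) m) < e/2"
    using order_tendstoD(2)[OF lim, of "e/2"] e by (auto dest: eventually_happens)
  have bs: "bounded_mat (s k)" using s by (auto simp: norm_approx_def)
  obtain b where b: "P b" "bounded_mat b" "opnorm (mat_diff (s k) b) < e/2"
    using s[of k] e unfolding norm_approx_def by (meson half_gt_zero)
  have "opnorm (mat_diff m b) \<le> opnorm (mat_diff m (s k)) + opnorm (mat_diff (s k) b)"
    by (rule opnorm_diff_triangle[OF m bs b(2)])
  also have "\<dots> < e" using k b(3) opnorm_diff_commute[OF m bs] by simp
  finally show "\<exists>b. P b \<and> bounded_mat b \<and> opnorm (mat_diff m b) < e" using b by blast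
qed

lemma cstar_gen_norm_approx:
  assumes "m \<in> cstar_gen S"
    and P_gen: "\<And>g. g \<in> S \<Longrightarrow> norm_approx P g"
    and P_add: "\<And>a b. P a \<Longrightarrow> P b \<Longrightarrow> P (mat_add a b)"
    and P_scale: "\<And>a c. P a \<Longrightarrow> P (mat_scale c a)"
    and P_mult: "\<And>a b. P a \<Longrightarrow> P b \<Longrightarrow> P (mat_mult a b)"
    and P_adj: "\<And>a. P a \<Longrightarrow> P (mat_adj a)"
  shows "norm_approx P m"
  using assms(1)
proof (induction m rule: cstar_gen.induct)
  case (gen a) then show ?case by (rule P_gen)
next
  case (add a b) show ?case by (rule norm_approx_add[OF add.IH]) (rule P_add)
next
  case (scale a c) show ?case by (rule norm_approx_scale[OF scale.IH]) (rule P_scale)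
next
  case (mult a b) show ?case by (rule norm_approx_mult[OF mult.IH]) (rule P_mult)
next
  case (adj a) show ?case by (rule norm_approx_adj[OF adj.IH]) (rule P_adj)
next
  case (lim s m)
  have "(\<lambda>k. opnorm (mat_diff (s k) m)) \<longlonglongrightarrow> 0" using lim.hyps(3) by (simp add: mat_diff_def)
  then show ?case by (rule norm_approx_limit[OF lim.IH lim.hyps(2)])
qed

section \<open>Recurrence in compact groups\<close>

lemma intmul_add: "intmul (a + b) x = intmul a x + intmul b x"
proof -
  define f where "f m = (\<Sum>i<m. x)" for m :: nat
  have f_add: "f (m + n) = f m + f n" for m n
    unfolding f_def by (induction n) (simp_all add: add.assoc)
  have "nat (a+b) + nat (-a) + nat (-b) = nat (-(a+b)) + nat a + nat b" by linarith
  then have "f (nat (a+b)) + f (nat (-a)) + f (nat (-b)) = f (nat (-(a+b))) + f (nat a) + f (nat b)"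
    by (metis f_add)
  then have "f (nat (a+b)) - f (nat (-(a+b))) = (f (nat a) - f (nat (-a))) + (f (nat b) - f (nat (-b)))"
    by (simp add: algebra_simps)
  moreover have "intmul n x = f (nat n) - f (nat (-n))" for n by (simp add: intmul_def f_def)
  ultimately show ?thesis by simp
qed

lemma intmul_minus: "intmul (- a) x = - intmul a x"
  using intmul_add[of a "-a" x] by (simp add: intmul_def eq_neg_iff_add_eq_0 add.commute)

lemma intmul_diff: "intmul (a - b) x = intmul a x - intmul b x"
  using intmul_add[of a "-b" x] by (simp add: intmul_minus)

lemma open_vimage_continuous_on_UNIV: "continuous_on UNIV f \<Longrightarrow> open S \<Longrightarrow> open (f -` S)"
  using continuous_on_open_vimage[OF open_UNIV] by auto

lemma zero_nhd_diff:
  fixes V :: "'g::topological_ab_group_add set"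
  assumes "open V" "0 \<in> V"
  obtains V' where "open V'" "0 \<in> V'" "\<And>a b. a \<in> V' \<Longrightarrow> b \<in> V' \<Longrightarrow> a - b \<in> V"
proof -
  have "continuous_on UNIV (\<lambda>p::'g \<times> 'g. fst p - snd p)" by (intro continuous_intros)
  then have "open ((\<lambda>p::'g \<times> 'g. fst p - snd p) -` V)"
    using assms(1) by (rule open_vimage_continuous_on_UNIV)
  moreover have "(0,0) \<in> (\<lambda>p::'g \<times> 'g. fst p - snd p) -` V" using assms(2) by simp
  ultimately obtain A B where "open A" "open B" "(0,0) \<in> A \<times> B"
      "A \<times> B \<subseteq> (\<lambda>p::'g \<times> 'g. fst p - snd p) -` V"
    by (rule open_prod_elim)
  then show ?thesis by (intro that[of "A \<inter> B"]) auto
qed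

lemma compact_group_finite_translates:
  fixes V :: "'g::topological_ab_group_add set"
  assumes cpt: "compact (UNIV :: 'g set)" and V: "open V" "0 \<in> V"
  obtains P where "finite P" "\<And>w. \<exists>p\<in>P. w - p \<in> V"
proof -
  have "open ((\<lambda>w. w - p) -` V)" for p :: 'g
    by (rule open_vimage_continuous_on_UNIV[OF _ V(1)]) (intro continuous_intros)
  moreover have "UNIV \<subseteq> (\<Union>p\<in>UNIV. (\<lambda>w. w - p) -` V)" using V(2) by auto
  ultimately obtain P where "P \<subseteq> UNIV" "finite P" "UNIV \<subseteq> (\<Union>p\<in>P. (\<lambda>w. w - p) -` V)"
    by (rule compactE_image[OF cpt])
  then show ?thesis using that by blast
qed

text \<open>Among the multiples \<open>i M x\<close> two, say for \<open>i < j\<close>, lie in the same translate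
  \<open>p + V'\<close> of a neighbourhood with \<open>V' - V' \<subseteq> V\<close>; then \<open>(j - i) M x \<in> V\<close>.\<close>

lemma compact_group_recurrence:
  fixes x :: "'g::topological_ab_group_add"
  assumes cpt: "compact (UNIV :: 'g set)" and V: "open V" "0 \<in> V"
  shows "\<exists>m\<ge>M. intmul m x \<in> V"
proof -
  obtain V' where V': "open V'" "0 \<in> V'" "\<And>a b. a \<in> V' \<Longrightarrow> b \<in> V' \<Longrightarrow> a - b \<in> V"
    using zero_nhd_diff[OF V] by blast
  obtain P where P: "finite P" "\<And>w. \<exists>p\<in>P. w - p \<in> V'"
    using compact_group_finite_translates[OF cpt V'(1,2)] by blast
  define M' where "M' = max M 1"
  have "\<forall>i::nat. \<exists>p. p \<in> P \<and> intmul (int i * M') x - p \<in> V'" using P(2) by blast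
  then obtain \<phi> where \<phi>: "\<And>i::nat. \<phi> i \<in> P \<and> intmul (int i * M') x - \<phi> i \<in> V'"
    by metis
  have "finite (range \<phi>)" using P(1) \<phi> by (meson finite_subset image_subsetI)
  then obtain i where "infinite {j. \<phi> j = \<phi> i}"
    using pigeonhole_infinite[of "UNIV :: nat set" \<phi>] by auto
  then have "\<not> {j. \<phi> j = \<phi> i} \<subseteq> {..i}" using finite_subset by blast
  then obtain j where "\<phi> j = \<phi> i" "\<not> j \<le> i" by blast
  then have j: "\<phi> j = \<phi> i" "i < j" by auto
  have "(intmul (int j * M') x - \<phi> j) - (intmul (int i * M') x - \<phi> i) \<in> V" using V'(3) \<phi> by blast
  then have "intmul ((int j - int i) * M') x \<in> V" using j(1) by (simp add: intmul_diff left_diff_distrib)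
  moreover have "(int j - int i) * M' \<ge> M"
  proof -
    have "(int j - int i) * M' \<ge> 1 * M'" using j(2) by (intro mult_right_mono) (auto simp: M'_def)
    then show ?thesis by (simp add: M'_def)
  qed
  ultimately show ?thesis by blast
qed

lemma dense_orbit_tail:
  fixes x :: "'g::topological_ab_group_add"
  assumes cpt: "compact (UNIV :: 'g set)" and dense: "closure (range (\<lambda>n::int. intmul n x)) = UNIV"
    and W: "open W" "W \<noteq> {}"
  shows "\<exists>k\<ge>N. intmul k x \<in> W"
proof -
  obtain q where q: "intmul q x \<in> W"
    using open_Int_closure_eq_empty[OF W(1), of "range (\<lambda>n::int. intmul n x)"] dense W(2) by auto
  define V where "V = (\<lambda>v. v + intmul q x) -` W"
  have "continuous_on UNIV (\<lambda>v::'g. v + intmul q x)" by (intro continuous_intros)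
  then have "open V" unfolding V_def using W(1) by (rule open_vimage_continuous_on_UNIV)
  moreover have "0 \<in> V" using q by (simp add: V_def)
  ultimately obtain m where "m \<ge> N - q" "intmul m x \<in> V"
    using compact_group_recurrence[OF cpt] by blast
  then show ?thesis by (intro exI[of _ "m + q"]) (simp add: V_def intmul_add)
qed

section \<open>Sequences sampled along the orbit\<close>

text \<open>The diagonals of elements of \<open>B\<close> are samples for \<open>F = principal UNIV\<close> (exact
  samples), those of \<open>A\<close> for \<open>F = at_top\<close> (samples up to a null sequence). The hypotheses
  on \<open>F\<close> make samples closed under shifts and the sampled function unique.\<close>

locale sampling =
  fixes x1 :: "'g::topological_ab_group_add" and F :: "int filter"
  assumes compact_UNIV: "compact (UNIV :: 'g set)"
    and eventually_shift: "\<And>P p. eventually P F \<Longrightarrow> eventually (\<lambda>k. P (k + p)) F"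
    and eventually_orbit_dense:
      "\<And>P W. eventually P F \<Longrightarrow> open W \<Longrightarrow> W \<noteq> {} \<Longrightarrow> \<exists>k. P k \<and> intmul k x1 \<in> W"
begin

definition samples :: "(int \<Rightarrow> complex) set" where
  "samples = {s. \<exists>g. continuous_on UNIV g \<and> ((\<lambda>k. s k - g (intmul k x1)) \<longlongrightarrow> 0) F}"

lemma samplesI: "continuous_on UNIV g \<Longrightarrow> ((\<lambda>k. s k - g (intmul k x1)) \<longlongrightarrow> 0) F \<Longrightarrow> s \<in> samples"
  unfolding samples_def by blast

lemma samplesE:
  assumes "s \<in> samples"
  obtains g where "continuous_on UNIV g" "((\<lambda>k. s k - g (intmul k x1)) \<longlongrightarrow> 0) F"
  using assms unfolding samples_def by blast

lemma continuous_bounded: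
  assumes "continuous_on UNIV (g :: 'g \<Rightarrow> complex)"
  obtains B where "\<And>z. cmod (g z) \<le> B"
  using compact_imp_bounded[OF compact_continuous_image[OF assms compact_UNIV]]
  by (metis bounded_iff rangeI)

lemma samples_of_continuous:
  assumes "continuous_on UNIV g"
  shows "(\<lambda>k. g (intmul k x1)) \<in> samples"
proof (rule samplesI[OF assms])
  show "((\<lambda>k. g (intmul k x1) - g (intmul k x1)) \<longlongrightarrow> 0) F" by simp
qed

lemma samples_const: "(\<lambda>k. c) \<in> samples"
  using samples_of_continuous[of "\<lambda>_. c"] by simp

lemma samples_eventually_eq:
  assumes "eventually (\<lambda>k. s k = t k) F" "t \<in> samples"
  shows "s \<in> samples"
proof -
  obtain g where g: "continuous_on UNIV g" "((\<lambda>k. t k - g (intmul k x1)) \<longlongrightarrow> 0) F"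
    using assms(2) by (rule samplesE)
  have "eventually (\<lambda>k. t k - g (intmul k x1) = s k - g (intmul k x1)) F"
    using assms(1) by eventually_elim simp
  from tendsto_cong[OF this] g(2) have "((\<lambda>k. s k - g (intmul k x1)) \<longlongrightarrow> 0) F" by simp
  with g(1) show ?thesis by (rule samplesI)
qed

lemma samples_add:
  assumes "s \<in> samples" "t \<in> samples"
  shows "(\<lambda>k. s k + t k) \<in> samples"
proof -
  obtain g h where g: "continuous_on UNIV g" "((\<lambda>k. s k - g (intmul k x1)) \<longlongrightarrow> 0) F"
    and h: "continuous_on UNIV h" "((\<lambda>k. t k - h (intmul k x1)) \<longlongrightarrow> 0) F"
    using assms by (metis samplesE)
  have "((\<lambda>k. (s k - g (intmul k x1)) + (t k - h (intmul k x1))) \<longlongrightarrow> 0 + 0) F"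
    by (intro tendsto_add g(2) h(2))
  moreover have "continuous_on UNIV (\<lambda>z. g z + h z)" using g(1) h(1) by (intro continuous_intros)
  ultimately show ?thesis by (intro samplesI[where g="\<lambda>z. g z + h z"]) (simp_all add: algebra_simps)
qed

lemma tendsto_zero_mult_bounded:
  fixes u c :: "'a \<Rightarrow> complex"
  assumes "(u \<longlongrightarrow> 0) G" "\<And>k. cmod (c k) \<le> B"
  shows "((\<lambda>k. u k * c k) \<longlongrightarrow> 0) G"
proof (rule Lim_null_comparison)
  show "eventually (\<lambda>k. norm (u k * c k) \<le> cmod (u k) * B) G"
    using assms(2) by (intro always_eventually allI) (simp add: norm_mult mult_left_mono)
  show "((\<lambda>k. cmod (u k) * B) \<longlongrightarrow> 0) G"
    by (intro tendsto_mult_left_zero tendsto_norm_zero assms(1))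
qed

lemma samples_mult:
  assumes "s \<in> samples" "t \<in> samples"
  shows "(\<lambda>k. s k * t k) \<in> samples"
proof -
  obtain g h where g: "continuous_on UNIV g" "((\<lambda>k. s k - g (intmul k x1)) \<longlongrightarrow> 0) F"
    and h: "continuous_on UNIV h" "((\<lambda>k. t k - h (intmul k x1)) \<longlongrightarrow> 0) F"
    using assms by (metis samplesE)
  obtain Bg Bh where Bg: "\<And>z. cmod (g z) \<le> Bg" and Bh: "\<And>z. cmod (h z) \<le> Bh"
    using continuous_bounded g(1) h(1) by metis
  have "((\<lambda>k. (s k - g (intmul k x1)) * (t k - h (intmul k x1))
          + (s k - g (intmul k x1)) * h (intmul k x1) + (t k - h (intmul k x1)) * g (intmul k x1))
        \<longlongrightarrow> 0 * 0 + 0 + 0) F"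
    by (intro tendsto_add tendsto_mult g(2) h(2) tendsto_zero_mult_bounded[OF g(2) Bh]
        tendsto_zero_mult_bounded[OF h(2) Bg])
  moreover have "continuous_on UNIV (\<lambda>z. g z * h z)" using g(1) h(1) by (intro continuous_intros)
  ultimately show ?thesis by (intro samplesI[where g="\<lambda>z. g z * h z"]) (simp_all add: algebra_simps)
qed

lemma samples_cnj:
  assumes "s \<in> samples"
  shows "(\<lambda>k. cnj (s k)) \<in> samples"
proof -
  obtain g where g: "continuous_on UNIV g" "((\<lambda>k. s k - g (intmul k x1)) \<longlongrightarrow> 0) F"
    using assms by (rule samplesE)
  have "((\<lambda>k. cnj (s k - g (intmul k x1))) \<longlongrightarrow> cnj 0) F" by (intro tendsto_cnj g(2))
  moreover have "continuous_on UNIV (\<lambda>z. cnj (g z))" using g(1) by (intro continuous_intros)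
  ultimately show ?thesis by (intro samplesI[where g="\<lambda>z. cnj (g z)"]) simp_all
qed

lemma samples_shift:
  assumes "s \<in> samples"
  shows "(\<lambda>k. s (k + p)) \<in> samples"
proof -
  obtain g where g: "continuous_on UNIV g" "((\<lambda>k. s k - g (intmul k x1)) \<longlongrightarrow> 0) F"
    using assms by (rule samplesE)
  have "((\<lambda>k. s (k + p) - g (intmul k x1 + intmul p x1)) \<longlongrightarrow> 0) F"
    unfolding tendsto_def
  proof (intro allI impI)
    fix S :: "complex set" assume "open S" "0 \<in> S"
    then have "eventually (\<lambda>k. s k - g (intmul k x1) \<in> S) F" by (rule topological_tendstoD[OF g(2)])
    from eventually_shift[OF this, of p]
    show "eventually (\<lambda>k. s (k + p) - g (intmul k x1 + intmul p x1) \<in> S) F" by (simp add: intmul_add)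
  qed
  moreover have "continuous_on UNIV (\<lambda>z. g (z + intmul p x1))"
    by (intro continuous_on_compose2[OF g(1)] continuous_intros) auto
  ultimately show ?thesis by (rule samplesI[rotated])
qed

lemma samples_sum:
  assumes "finite P" "\<And>p. p \<in> P \<Longrightarrow> f p \<in> samples"
  shows "(\<lambda>k. \<Sum>p\<in>P. f p k) \<in> samples"
  using assms
proof (induction P rule: finite_induct)
  case empty then show ?case by (simp add: samples_const)
next
  case (insert x P)
  then have "(\<lambda>k. f x k + (\<Sum>p\<in>P. f p k)) \<in> samples" by (intro samples_add) auto
  then show ?case using insert by simp
qed

text \<open>Since the orbit meets every open set along \<open>F\<close>, a uniform bound on the difference of
  two sample sequences passes to the sampled functions.\<close>

lemma sampled_functions_dist_le:
  assumes g: "continuous_on UNIV g" "((\<lambda>k. s k - g (intmul k x1)) \<longlongrightarrow> 0) F"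
    and h: "continuous_on UNIV h" "((\<lambda>k. t k - h (intmul k x1)) \<longlongrightarrow> 0) F"
    and d: "\<And>k. cmod (s k - t k) \<le> d"
  shows "cmod (g z - h z) \<le> d"
proof (rule ccontr)
  assume contra: "\<not> ?thesis"
  define \<eta> where "\<eta> = (cmod (g z - h z) - d) / 4"
  have \<eta>: "\<eta> > 0" using contra by (simp add: \<eta>_def)
  define W where "W = g -` ball (g z) \<eta> \<inter> h -` ball (h z) \<eta>"
  have "open W" unfolding W_def
    using g(1) h(1) by (intro open_Int open_vimage_continuous_on_UNIV) simp_all
  moreover have "z \<in> W" using \<eta> by (simp add: W_def)
  moreover have "eventually (\<lambda>k. cmod (s k - g (intmul k x1)) < \<eta> \<and> cmod (t k - h (intmul k x1)) < \<eta>) F"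
    using tendsto_iff[THEN iffD1, OF g(2), rule_format, OF \<eta>]
      tendsto_iff[THEN iffD1, OF h(2), rule_format, OF \<eta>]
    by (auto intro: eventually_conj)
  ultimately obtain k where k: "cmod (s k - g (intmul k x1)) < \<eta>" "cmod (t k - h (intmul k x1)) < \<eta>"
      "intmul k x1 \<in> W"
    using eventually_orbit_dense by blast
  have "cmod (g z - g (intmul k x1)) < \<eta>" "cmod (h (intmul k x1) - h z) < \<eta>"
    using k(3) by (auto simp: W_def dist_norm norm_minus_commute)
  then have "cmod (g z - h z) < 4 * \<eta> + d"
    using k(1,2) d[of k] norm_minus_commute[of "s k" "g (intmul k x1)"]
      dist_triangle[of "g z" "h z" "g (intmul k x1)", unfolded dist_norm]
      dist_triangle[of "g (intmul k x1)" "h z" "s k", unfolded dist_norm]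
      dist_triangle[of "s k" "h z" "t k", unfolded dist_norm]
      dist_triangle[of "t k" "h z" "h (intmul k x1)", unfolded dist_norm]
    by linarith
  then show False by (simp add: \<eta>_def field_simps)
qed

lemma sampled_functions_uniformly_Cauchy:
  fixes s :: "nat \<Rightarrow> int \<Rightarrow> complex"
  assumes g: "\<And>n. continuous_on UNIV (g n)" "\<And>n. ((\<lambda>k. s n k - g n (intmul k x1)) \<longlongrightarrow> 0) F"
    and s: "uniformly_Cauchy_on UNIV s"
  shows "uniformly_Cauchy_on UNIV g"
proof (rule uniformly_Cauchy_onI)
  fix e :: real assume "e > 0"
  then obtain M where M: "\<forall>k\<in>UNIV. \<forall>m\<ge>M. \<forall>n\<ge>M. dist (s m k) (s n k) < e / 2"
    using s unfolding uniformly_Cauchy_on_def by (meson half_gt_zero)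
  have "dist (g m z) (g n z) < e" if "m \<ge> M" "n \<ge> M" for m n z
  proof -
    have "cmod (s m k - s n k) \<le> e / 2" for k using M that by (simp add: dist_norm less_imp_le)
    then have "cmod (g m z - g n z) \<le> e / 2"
      by (rule sampled_functions_dist_le[OF g(1)[of m] g(2)[of m] g(1)[of n] g(2)[of n]])
    then show ?thesis using \<open>e > 0\<close> by (simp add: dist_norm)
  qed
  then show "\<exists>M. \<forall>z\<in>UNIV. \<forall>m\<ge>M. \<forall>n\<ge>M. dist (g m z) (g n z) < e" by blast
qed

lemma samples_uniform_limit:
  assumes s: "\<And>n. s n \<in> samples" and lim: "uniform_limit UNIV s t sequentially"
  shows "t \<in> samples"
proof -
  have "\<forall>n. \<exists>g. continuous_on UNIV g \<and> ((\<lambda>k. s n k - g (intmul k x1)) \<longlongrightarrow> 0) F"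
    using s unfolding samples_def by blast
  then obtain g where g: "\<And>n. continuous_on UNIV (g n)"
      "\<And>n. ((\<lambda>k. s n k - g n (intmul k x1)) \<longlongrightarrow> 0) F"
    by metis
  have "uniformly_Cauchy_on UNIV s"
    by (rule uniformly_convergent_Cauchy) (use lim in \<open>auto simp: uniformly_convergent_on_def\<close>)
  then have "uniformly_Cauchy_on UNIV g"
    using sampled_functions_uniformly_Cauchy[where g=g and s=s] g by blast
  then obtain l where l: "uniform_limit UNIV g l sequentially"
    using Cauchy_uniformly_convergent unfolding uniformly_convergent_on_def by blast
  have "continuous_on UNIV l"
    using l by (rule uniform_limit_theorem[rotated]) (simp_all add: g(1))
  moreover have "((\<lambda>k. t k - l (intmul k x1)) \<longlongrightarrow> 0) F"
    unfolding tendsto_iff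
  proof (intro allI impI)
    fix e :: real assume "e > 0"
    then have "e / 3 > 0" by simp
    from eventually_conj[OF uniform_limitD[OF lim this] uniform_limitD[OF l this]]
    obtain n where n: "\<And>k. dist (s n k) (t k) < e / 3" "\<And>z. dist (g n z) (l z) < e / 3"
      using eventually_happens'[OF sequentially_bot] by blast
    have "eventually (\<lambda>k. dist (s n k - g n (intmul k x1)) 0 < e / 3) F"
      using tendsto_iff[THEN iffD1, OF g(2)[of n], rule_format, OF \<open>e / 3 > 0\<close>] .
    then show "eventually (\<lambda>k. dist (t k - l (intmul k x1)) 0 < e) F"
    proof eventually_elim
      case (elim k)
      then show ?case
        using n(1)[of k] n(2)[of "intmul k x1"]
          dist_triangle[of "t k" "l (intmul k x1)" "s n k", unfolded dist_norm]
          dist_triangle[of "s n k" "l (intmul k x1)" "g n (intmul k x1)", unfolded dist_norm]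
        by (simp add: dist_norm norm_minus_commute)
    qed
  qed
  ultimately show ?thesis by (rule samplesI)
qed

end

section \<open>Banded matrices with sampled diagonals\<close>

definition band :: "int \<Rightarrow> int mat \<Rightarrow> bool" where
  "band N M \<longleftrightarrow> (\<forall>i j. N < \<bar>i - j\<bar> \<longrightarrow> M i j = 0)"

lemma mat_mult_band:
  assumes "band N M"
  shows "mat_mult M M' i j = (\<Sum>p\<in>{-N..N}. M i (i + p) * M' (i + p) j)"
proof -
  have "mat_mult M M' i j = infsum (\<lambda>l. M i l * M' l j) {i-N..i+N}"
    unfolding mat_mult_def
    by (rule infsum_cong_neutral) (use assms in \<open>auto simp: band_def\<close>)
  also have "\<dots> = (\<Sum>p\<in>{-N..N}. M i (i + p) * M' (i + p) j)"
    by (simp, rule sum.reindex_bij_witness[of _ "\<lambda>p. i + p" "\<lambda>l. l - i"]) auto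
  finally show ?thesis .
qed

context sampling
begin

definition sampled_band :: "int mat \<Rightarrow> bool" where
  "sampled_band M \<longleftrightarrow> (\<exists>N. band N M) \<and> (\<forall>n. (\<lambda>k. M (k + n) k) \<in> samples)"

lemma sampled_band_add: "sampled_band a \<Longrightarrow> sampled_band b \<Longrightarrow> sampled_band (mat_add a b)"
proof -
  assume a: "sampled_band a" and b: "sampled_band b"
  obtain N1 N2 where "band N1 a" "band N2 b" using a b by (auto simp: sampled_band_def)
  then have "band (max N1 N2) (mat_add a b)" by (auto simp: band_def mat_add_def)
  moreover have "(\<lambda>k. mat_add a b (k + n) k) \<in> samples" for n
    using samples_add[of "\<lambda>k. a (k + n) k" "\<lambda>k. b (k + n) k"] a b by (simp add: sampled_band_def mat_add_def)
  ultimately show ?thesis by (auto simp: sampled_band_def)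
qed

lemma sampled_band_scale: "sampled_band a \<Longrightarrow> sampled_band (mat_scale c a)"
proof -
  assume a: "sampled_band a"
  obtain N where "band N a" using a by (auto simp: sampled_band_def)
  then have "band N (mat_scale c a)" by (auto simp: band_def mat_scale_def)
  moreover have "(\<lambda>k. mat_scale c a (k + n) k) \<in> samples" for n
    using samples_mult[OF samples_const, of "\<lambda>k. a (k + n) k" c] a by (simp add: sampled_band_def mat_scale_def)
  ultimately show ?thesis by (auto simp: sampled_band_def)
qed

lemma sampled_band_adj: "sampled_band a \<Longrightarrow> sampled_band (mat_adj a)"
proof -
  assume a: "sampled_band a"
  obtain N where "band N a" using a by (auto simp: sampled_band_def)
  then have "band N (mat_adj a)" by (auto simp: band_def mat_adj_def abs_minus_commute)
  moreover have "(\<lambda>k. mat_adj a (k + n) k) \<in> samples" for n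
  proof -
    have "(\<lambda>k. a (k + - n) k) \<in> samples" using a unfolding sampled_band_def by blast
    then have "(\<lambda>k. cnj (a ((k + n) + - n) (k + n))) \<in> samples"
      by (intro samples_cnj samples_shift[where s="\<lambda>k. a (k + - n) k"])
    then show ?thesis by (simp add: mat_adj_def)
  qed
  ultimately show ?thesis by (auto simp: sampled_band_def)
qed

lemma sampled_band_mult: "sampled_band a \<Longrightarrow> sampled_band b \<Longrightarrow> sampled_band (mat_mult a b)"
proof -
  assume a: "sampled_band a" and b: "sampled_band b"
  obtain N1 N2 where N: "band N1 a" "band N2 b" using a b by (auto simp: sampled_band_def)
  have "band (N1 + N2) (mat_mult a b)"
    unfolding band_def
  proof (intro allI impI)
    fix i j assume "N1 + N2 < \<bar>i - j\<bar>"
    then have "a i (i + p) * b (i + p) j = 0" if "p \<in> {-N1..N1}" for p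
      using that N(2) by (auto simp: band_def)
    then show "mat_mult a b i j = 0" unfolding mat_mult_band[OF N(1)] by (intro sum.neutral) auto
  qed
  moreover have "(\<lambda>k. mat_mult a b (k + n) k) \<in> samples" for n
  proof -
    have "(\<lambda>k. \<Sum>p\<in>{-N1..N1}. a (k + (n + p) + - p) (k + (n + p)) * b (k + (n + p)) k) \<in> samples"
    proof (rule samples_sum)
      fix p
      have "(\<lambda>k. a (k + - p) k) \<in> samples" "(\<lambda>k. b (k + (n + p)) k) \<in> samples"
        using a b unfolding sampled_band_def by blast+
      then show "(\<lambda>k. a (k + (n + p) + - p) (k + (n + p)) * b (k + (n + p)) k) \<in> samples"
        by (intro samples_mult samples_shift[where s="\<lambda>k. a (k + - p) k"])
    qed simp
    then show ?thesis by (simp add: mat_mult_band[OF N(1)] add.assoc)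
  qed
  ultimately show ?thesis by (auto simp: sampled_band_def)
qed

lemma sampled_band_eventually_const:
  assumes "band N M" "\<And>n. eventually (\<lambda>k. M (k + n) k = c n) F"
  shows "sampled_band M"
proof -
  have "(\<lambda>k. M (k + n) k) \<in> samples" for n by (rule samples_eventually_eq[OF assms(2) samples_const])
  then show ?thesis using assms(1) by (auto simp: sampled_band_def)
qed

lemma sampled_band_diag_mat:
  assumes "d \<in> samples"
  shows "sampled_band (diag_mat d)"
proof -
  have "band 0 (diag_mat d)" by (auto simp: band_def diag_mat_def)
  moreover have "(\<lambda>k. diag_mat d (k + n) k) \<in> samples" for n
    using assms samples_const[of 0] by (cases "n = 0") (simp_all add: diag_mat_def)
  ultimately show ?thesis by (auto simp: sampled_band_def)
qed

text \<open>The diagonals of a norm limit are uniform limits of the diagonals, because a matrix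
  entry is bounded by the operator norm. \<open>E\<close> is either the identity or the extension of
  matrices on \<open>\<nat>\<close> by zero to \<open>\<int>\<close>.\<close>

lemma norm_approx_diagonal_samples:
  assumes a: "norm_approx (\<lambda>b. sampled_band (E b)) a"
    and E_entry: "\<And>m i j. bounded_mat m \<Longrightarrow> cmod (E m i j) \<le> opnorm m"
    and E_diff: "\<And>a b. E (mat_diff a b) = mat_diff (E a) (E b)"
  shows "(\<lambda>k. E a (k + n) k) \<in> samples"
proof -
  have ba: "bounded_mat a" using a by (simp add: norm_approx_def)
  have "\<forall>m::nat. \<exists>b. sampled_band (E b) \<and> bounded_mat b \<and> opnorm (mat_diff a b) < 1 / (real m + 1)"
    using a unfolding norm_approx_def by auto
  then obtain b where b: "\<And>m. sampled_band (E (b m))" "\<And>m. bounded_mat (b m)"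
      "\<And>m. opnorm (mat_diff a (b m)) < 1 / (real m + 1)"
    by metis
  show ?thesis
  proof (rule samples_uniform_limit)
    show "(\<lambda>k. E (b m) (k + n) k) \<in> samples" for m using b(1) by (simp add: sampled_band_def)
    show "uniform_limit UNIV (\<lambda>m k. E (b m) (k + n) k) (\<lambda>k. E a (k + n) k) sequentially"
      unfolding uniform_limit_sequentially_iff
    proof (intro allI impI)
      fix e :: real assume "e > 0"
      then obtain M :: nat where M: "1 / (real M + 1) < e"
        by (metis add.commute nat_approx_posE of_nat_Suc)
      have "dist (E (b m) (k + n) k) (E a (k + n) k) < e" if "m \<ge> M" for m k
      proof -
        have "dist (E (b m) (k + n) k) (E a (k + n) k) = cmod (E (mat_diff (b m) a) (k + n) k)"
          by (simp only: E_diff) (simp add: mat_diff_def dist_norm)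
        also have "\<dots> \<le> opnorm (mat_diff (b m) a)" by (rule E_entry[OF opnorm_diff(1)[OF b(2) ba]])
        also have "\<dots> < 1 / (real m + 1)" using b(3) opnorm_diff_commute[OF b(2) ba] by simp
        also have "\<dots> \<le> 1 / (real M + 1)" using that by (simp add: frac_le)
        finally show ?thesis using M by simp
      qed
      then show "\<exists>M. \<forall>m\<ge>M. \<forall>k\<in>UNIV. dist (E (b m) (k + n) k) (E a (k + n) k) < e" by blast
    qed
  qed
qed

end

lemma sampling_principal_UNIV:
  assumes "compact (UNIV :: 'g::topological_ab_group_add set)"
    and "closure (range (\<lambda>n::int. intmul n x1)) = (UNIV :: 'g set)"
  shows "sampling x1 (principal UNIV)"
proof
  fix P :: "int \<Rightarrow> bool" and W :: "'g set"
  assume "eventually P (principal UNIV)" "open W" "W \<noteq> {}"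
  then show "\<exists>k. P k \<and> intmul k x1 \<in> W"
    using dense_orbit_tail[OF assms] by (metis UNIV_I eventually_principal)
qed (use assms in \<open>simp_all add: eventually_principal\<close>)

lemma sampling_at_top:
  assumes "compact (UNIV :: 'g::topological_ab_group_add set)"
    and "closure (range (\<lambda>n::int. intmul n x1)) = (UNIV :: 'g set)"
  shows "sampling x1 at_top"
proof
  fix P :: "int \<Rightarrow> bool" and p
  assume "eventually P at_top"
  then obtain N where "\<forall>n\<ge>N. P n" by (auto simp: eventually_at_top_linorder)
  then show "eventually (\<lambda>k. P (k + p)) at_top"
    by (auto simp: eventually_at_top_linorder intro: exI[of _ "N - p"])
next
  fix P :: "int \<Rightarrow> bool" and W :: "'g set"
  assume "eventually P at_top" "open W" "W \<noteq> {}"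
  then show "\<exists>k. P k \<and> intmul k x1 \<in> W"
    using dense_orbit_tail[OF assms] by (metis eventually_at_top_linorder)
qed (fact assms(1))

lemma samples_principal_UNIV:
  assumes "sampling x1 (principal UNIV)" "s \<in> sampling.samples x1 (principal UNIV)"
  obtains g where "continuous_on UNIV g" "s = (\<lambda>k. g (intmul k x1))"
proof -
  obtain g where g: "continuous_on UNIV g" "((\<lambda>k. s k - g (intmul k x1)) \<longlongrightarrow> 0) (principal UNIV)"
    using sampling.samplesE[OF assms] by blast
  have "s k = g (intmul k x1)" for k
  proof (rule ccontr)
    assume "s k \<noteq> g (intmul k x1)"
    then have "eventually (\<lambda>l. dist (s l - g (intmul l x1)) 0 < cmod (s k - g (intmul k x1))) (principal UNIV)"
      using tendsto_iff[THEN iffD1, OF g(2), rule_format] by simp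
    then show False by (auto simp: eventually_principal)
  qed
  then show ?thesis using that g(1) by blast
qed

lemma samples_at_top_decomp:
  assumes "sampling x1 at_top" "d' \<in> sampling.samples x1 at_top" "\<And>k. d' (int k) = d k"
  obtains \<alpha> g where "\<alpha> \<longlonglongrightarrow> 0" "continuous_on UNIV g" "\<And>k. d k = \<alpha> k + g (intmul (int k) x1)"
proof -
  obtain g where g: "continuous_on UNIV g" "((\<lambda>k. d' k - g (intmul k x1)) \<longlongrightarrow> 0) at_top"
    using sampling.samplesE[OF assms(1,2)] by blast
  have "(\<lambda>k. d k - g (intmul (int k) x1)) \<longlonglongrightarrow> 0"
    using filterlim_compose[OF g(2) filterlim_int_sequentially] by (simp add: assms(3))
  with g(1) show ?thesis by (intro that) auto
qed

lemma diag_mat_bounded: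
  assumes "\<And>i. cmod (d i) \<le> C" "C \<ge> 0"
  shows "bounded_mat (diag_mat d)" "opnorm (diag_mat d) \<le> C"
proof -
  have "\<And>F x y. finite F \<Longrightarrow> sq_norm_on F x \<le> 1 \<Longrightarrow> sq_norm_on F y \<le> 1 \<Longrightarrow>
      bilin_abs (diag_mat d) F x y \<le> C"
  proof -
    fix F and x y :: "'a \<Rightarrow> complex"
    assume F: "finite F" and x: "sq_norm_on F x \<le> 1" and y: "sq_norm_on F y \<le> 1"
    have "(\<Sum>j\<in>F. cnj (y i) * diag_mat d i j * x j) = cnj (y i) * d i * x i" if "i \<in> F" for i
    proof -
      have "(\<Sum>j\<in>F. cnj (y i) * diag_mat d i j * x j) = (\<Sum>j\<in>F. if i = j then cnj (y i) * d i * x i else 0)"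
        by (intro sum.cong) (simp_all add: diag_mat_def)
      then show ?thesis using F that by simp
    qed
    then have "bilin_abs (diag_mat d) F x y = cmod (\<Sum>i\<in>F. cnj (y i) * d i * x i)" by simp
    also have "\<dots> \<le> (\<Sum>i\<in>F. C * cmod (y i * x i))"
      using assms(1) by (intro order_trans[OF norm_sum] sum_mono) (simp add: norm_mult mult_right_mono mult_ac)
    also have "\<dots> \<le> C * (1 * 1)"
    proof -
      have "(\<Sum>i\<in>F. cmod (y i * x i)) \<le> 1 * 1" by (rule sum_norm_mult_le) (use x y in simp_all)
      from mult_left_mono[OF this assms(2)] show ?thesis by (simp add: sum_distrib_left)
    qed
    finally show "bilin_abs (diag_mat d) F x y \<le> C" by simp
  qed
  from opnorm_le_bilin_bound[OF this]
  show "bounded_mat (diag_mat d)" "opnorm (diag_mat d) \<le> C" by auto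
qed

lemma bounded_mat_diag_mat: "bounded (range d) \<Longrightarrow> bounded_mat (diag_mat d)"
  by (metis bounded_iff diag_mat_bounded(1) max.cobounded1 max.coboundedI2 rangeI)

lemma bounded_mat_inj:
  fixes \<sigma> :: "'i \<Rightarrow> 'i"
  assumes "inj \<sigma>"
  shows "bounded_mat (\<lambda>i j. if i = \<sigma> j then 1 else 0)"
proof -
  let ?m = "(\<lambda>i j. if i = \<sigma> j then 1 else 0) :: 'i mat"
  have "\<And>F x y. finite F \<Longrightarrow> sq_norm_on F x \<le> 1 \<Longrightarrow> sq_norm_on F y \<le> 1 \<Longrightarrow> bilin_abs ?m F x y \<le> 1"
  proof -
    fix F and x y :: "'i \<Rightarrow> complex"
    assume F: "finite F" and x: "sq_norm_on F x \<le> 1" and y: "sq_norm_on F y \<le> 1"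
    define J where "J = {j\<in>F. \<sigma> j \<in> F}"
    have J: "finite J" "J \<subseteq> F" using F by (auto simp: J_def)
    have "(\<Sum>i\<in>F. \<Sum>j\<in>F. cnj (y i) * ?m i j * x j) = (\<Sum>j\<in>F. \<Sum>i\<in>F. cnj (y i) * ?m i j * x j)"
      by (rule sum.swap)
    also have "\<dots> = (\<Sum>j\<in>F. if j \<in> J then cnj (y (\<sigma> j)) * x j else 0)"
    proof (rule sum.cong)
      fix j assume "j \<in> F"
      have "(\<Sum>i\<in>F. cnj (y i) * ?m i j * x j) = (\<Sum>i\<in>F. if i = \<sigma> j then cnj (y (\<sigma> j)) * x j else 0)"
        by (rule sum.cong) auto
      then show "(\<Sum>i\<in>F. cnj (y i) * ?m i j * x j) = (if j \<in> J then cnj (y (\<sigma> j)) * x j else 0)"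
        using F \<open>j \<in> F\<close> by (simp add: J_def)
    qed simp
    also have "\<dots> = (\<Sum>j\<in>J. cnj (y (\<sigma> j)) * x j)" by (rule sum_if_mem_subset[OF F J(2)])
    finally have "bilin_abs ?m F x y \<le> (\<Sum>j\<in>J. cmod (y (\<sigma> j) * x j))"
      by (simp add: norm_mult order_trans[OF norm_sum])
    also have "\<dots> \<le> 1 * 1"
    proof (rule sum_norm_mult_le)
      show "sq_norm_on J x \<le> 1\<^sup>2" using x J F by (simp add: order_trans[OF sum_mono2])
      have "sq_norm_on J (\<lambda>j. y (\<sigma> j)) = sq_norm_on (\<sigma> ` J) y"
        using assms by (simp add: sum.reindex inj_on_def inj_def)
      also have "\<dots> \<le> sq_norm_on F y" using F by (intro sum_mono2) (auto simp: J_def)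
      finally show "sq_norm_on J (\<lambda>j. y (\<sigma> j)) \<le> 1\<^sup>2" using y by simp
    qed simp_all
    finally show "bilin_abs ?m F x y \<le> 1" by simp
  qed
  from opnorm_le_bilin_bound[OF this] show ?thesis by auto
qed

lemma shiftV_bounded: "bounded_mat shiftV"
  using bounded_mat_inj[of "\<lambda>j::int. j + 1"] by (simp add: shiftV_def inj_def)

lemma shiftU_bounded: "bounded_mat shiftU"
  using bounded_mat_inj[of "\<lambda>j::nat. j + 1"] by (simp add: shiftU_def inj_def)

lemma bounded_range_continuous_compose:
  assumes "compact (UNIV :: 'g::topological_space set)" "continuous_on UNIV (f :: 'g \<Rightarrow> complex)"
  shows "bounded (range (\<lambda>k. f (h k)))"
  using compact_imp_bounded[OF compact_continuous_image[OF assms(2,1)]] by (rule bounded_subset) auto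

lemma bounded_mat_multM:
  fixes x1 :: "'g::topological_ab_group_add"
  assumes "compact (UNIV :: 'g::topological_ab_group_add set)" "continuous_on UNIV f"
  shows "bounded_mat (multM x1 f)"
  unfolding multM_def
  by (intro bounded_mat_diag_mat bounded_range_continuous_compose[where h="\<lambda>l. intmul l x1"] assms)

lemma bounded_mat_multMp:
  fixes x1 :: "'g::topological_ab_group_add"
  assumes "compact (UNIV :: 'g::topological_ab_group_add set)" "continuous_on UNIV f"
  shows "bounded_mat (multMp x1 f)"
  unfolding multMp_def
  by (intro bounded_mat_diag_mat bounded_range_continuous_compose[where h="\<lambda>k. intmul (int k) x1"] assms)

definition zero_ext :: "nat mat \<Rightarrow> int mat" where
  "zero_ext m i j = (if 0 \<le> i \<and> 0 \<le> j then m (nat i) (nat j) else 0)"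

lemma zero_ext_add: "zero_ext (mat_add a b) = mat_add (zero_ext a) (zero_ext b)"
  by (auto simp: zero_ext_def mat_add_def fun_eq_iff)

lemma zero_ext_scale: "zero_ext (mat_scale c a) = mat_scale c (zero_ext a)"
  by (auto simp: zero_ext_def mat_scale_def fun_eq_iff)

lemma zero_ext_adj: "zero_ext (mat_adj a) = mat_adj (zero_ext a)"
  by (auto simp: zero_ext_def mat_adj_def fun_eq_iff)

lemma zero_ext_diff: "zero_ext (mat_diff a b) = mat_diff (zero_ext a) (zero_ext b)"
  by (auto simp: zero_ext_def mat_diff_def fun_eq_iff)

lemma zero_ext_mult: "zero_ext (mat_mult a b) = mat_mult (zero_ext a) (zero_ext b)"
proof (intro ext)
  fix i j :: int
  show "zero_ext (mat_mult a b) i j = mat_mult (zero_ext a) (zero_ext b) i j"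
  proof (cases "0 \<le> i \<and> 0 \<le> j")
    case True
    have "mat_mult (zero_ext a) (zero_ext b) i j = infsum (\<lambda>l. zero_ext a i l * zero_ext b l j) (range int)"
      unfolding mat_mult_def
      by (rule infsum_cong_neutral) (auto simp: zero_ext_def image_iff, presburger)
    also have "\<dots> = infsum ((\<lambda>l. zero_ext a i l * zero_ext b l j) \<circ> int) UNIV"
      by (rule infsum_reindex) simp
    also have "\<dots> = zero_ext (mat_mult a b) i j"
      using True by (simp add: zero_ext_def mat_mult_def o_def)
    finally show ?thesis by simp
  qed (auto simp: zero_ext_def mat_mult_def)
qed

lemma norm_zero_ext_le_opnorm: "bounded_mat m \<Longrightarrow> cmod (zero_ext m i j) \<le> opnorm m"
  using norm_entry_le_opnorm[of m] opnorm_nonneg[of m] by (auto simp: zero_ext_def)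

lemma infsum_if_eq: "infsum (\<lambda>k. if k = c then f k else (0::complex)) UNIV = f c"
proof -
  have "infsum (\<lambda>k. if k = c then f k else (0::complex)) UNIV = infsum (\<lambda>k. if k = c then f k else 0) {c}"
    by (rule infsum_cong_neutral) auto
  then show ?thesis by simp
qed

lemma mat_mult_diag_left: "mat_mult (diag_mat d) X i j = d i * X i j"
proof -
  have "mat_mult (diag_mat d) X i j = infsum (\<lambda>k. if k = i then d i * X k j else 0) UNIV"
    unfolding mat_mult_def by (rule infsum_cong) (auto simp: diag_mat_def)
  then show ?thesis by (simp add: infsum_if_eq)
qed

lemma mat_mult_diag_right: "mat_mult X (diag_mat d) i j = X i j * d j"
proof -
  have "mat_mult X (diag_mat d) i j = infsum (\<lambda>k. if k = j then X i k * d j else 0) UNIV"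
    unfolding mat_mult_def by (rule infsum_cong) (auto simp: diag_mat_def)
  then show ?thesis by (simp add: infsum_if_eq)
qed

lemma mat_mult_shiftU_left: "mat_mult shiftU X i j = (if i = 0 then 0 else X (i - 1) j)"
proof -
  have "mat_mult shiftU X i j = infsum (\<lambda>k. if k = i - 1 then (if i = 0 then 0 else X k j) else 0) UNIV"
    unfolding mat_mult_def by (rule infsum_cong) (auto simp: shiftU_def)
  then show ?thesis by (simp add: infsum_if_eq)
qed

lemma mat_mult_adj_shiftU_left: "mat_mult (mat_adj shiftU) X i j = X (i + 1) j"
proof -
  have "mat_mult (mat_adj shiftU) X i j = infsum (\<lambda>k. if k = i + 1 then X k j else 0) UNIV"
    unfolding mat_mult_def by (rule infsum_cong) (auto simp: shiftU_def mat_adj_def)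
  then show ?thesis by (simp add: infsum_if_eq)
qed

lemma mat_mult_adj_shiftU_right: "mat_mult X (mat_adj shiftU) i j = (if j = 0 then 0 else X i (j - 1))"
proof -
  have "mat_mult X (mat_adj shiftU) i j = infsum (\<lambda>k. if k = j - 1 then (if j = 0 then 0 else X i k) else 0) UNIV"
    unfolding mat_mult_def by (rule infsum_cong) (auto simp: shiftU_def mat_adj_def)
  then show ?thesis by (simp add: infsum_if_eq)
qed

lemma mat_pow_shiftU: "mat_pow shiftU n = (\<lambda>i j. if i = j + n then 1 else 0)"
  by (induction n) (auto simp: fun_eq_iff mat_id_def diag_mat_def mat_mult_shiftU_left)

lemma mat_pow_adj_shiftU: "mat_pow (mat_adj shiftU) n = (\<lambda>i j. if j = i + n then 1 else 0)"
  by (induction n) (auto simp: fun_eq_iff mat_id_def diag_mat_def mat_mult_adj_shiftU_left)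

lemma mat_mult_pow_shiftU_left: "mat_mult (mat_pow shiftU n) X i j = (if n \<le> i then X (i - n) j else 0)"
proof -
  have "mat_mult (mat_pow shiftU n) X i j = infsum (\<lambda>k. if k = i - n then (if n \<le> i then X k j else 0) else 0) UNIV"
    unfolding mat_mult_def mat_pow_shiftU by (rule infsum_cong) auto
  then show ?thesis by (simp add: infsum_if_eq)
qed

lemma mat_mult_pow_adj_shiftU_right:
  "mat_mult X (mat_pow (mat_adj shiftU) n) i j = (if n \<le> j then X i (j - n) else 0)"
proof -
  have "mat_mult X (mat_pow (mat_adj shiftU) n) i j = infsum (\<lambda>k. if k = j - n then (if n \<le> j then X i k else 0) else 0) UNIV"
    unfolding mat_mult_def mat_pow_adj_shiftU by (rule infsum_cong) auto
  then show ?thesis by (simp add: infsum_if_eq)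
qed

lemma mat_pow_shiftV: "mat_pow shiftV n = (\<lambda>i j. if i = j + int n then 1 else 0)"
proof (induction n)
  case (Suc n)
  have "mat_mult shiftV X i j = X (i - 1) j" for X :: "int mat" and i j
  proof -
    have "mat_mult shiftV X i j = infsum (\<lambda>k. if k = i - 1 then X k j else 0) UNIV"
      unfolding mat_mult_def by (rule infsum_cong) (auto simp: shiftV_def)
    then show ?thesis by (simp add: infsum_if_eq)
  qed
  with Suc show ?case by (auto simp: fun_eq_iff)
qed (simp add: fun_eq_iff mat_id_def diag_mat_def)

lemma mat_pow_adj_shiftV: "mat_pow (mat_adj shiftV) n = (\<lambda>i j. if j = i + int n then 1 else 0)"
proof (induction n)
  case (Suc n)
  have "mat_mult (mat_adj shiftV) X i j = X (i + 1) j" for X :: "int mat" and i j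
  proof -
    have "mat_mult (mat_adj shiftV) X i j = infsum (\<lambda>k. if k = i + 1 then X k j else 0) UNIV"
      unfolding mat_mult_def by (rule infsum_cong) (auto simp: shiftV_def mat_adj_def)
    then show ?thesis by (simp add: infsum_if_eq)
  qed
  with Suc show ?case by (auto simp: fun_eq_iff)
qed (simp add: fun_eq_iff mat_id_def diag_mat_def)

lemma mat_mult_pow_shiftV_left: "mat_mult (mat_pow shiftV n) X i j = X (i - int n) j"
proof -
  have "mat_mult (mat_pow shiftV n) X i j = infsum (\<lambda>k. if k = i - int n then X k j else 0) UNIV"
    unfolding mat_mult_def mat_pow_shiftV by (rule infsum_cong) auto
  then show ?thesis by (simp add: infsum_if_eq)
qed

lemma mat_mult_pow_adj_shiftV_right: "mat_mult X (mat_pow (mat_adj shiftV) n) i j = X i (j - int n)"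
proof -
  have "mat_mult X (mat_pow (mat_adj shiftV) n) i j = infsum (\<lambda>k. if k = j - int n then X i k else 0) UNIV"
    unfolding mat_mult_def mat_pow_adj_shiftV by (rule infsum_cong) auto
  then show ?thesis by (simp add: infsum_if_eq)
qed

lemma alg_A_shiftU: "shiftU \<in> alg_A x1"
  unfolding alg_A_def by (rule cstar_gen.gen) simp

lemma alg_A_multMp: "continuous_on UNIV f \<Longrightarrow> multMp x1 f \<in> alg_A x1"
  unfolding alg_A_def by (rule cstar_gen.gen) auto

lemma alg_A_add: "a \<in> alg_A x1 \<Longrightarrow> b \<in> alg_A x1 \<Longrightarrow> mat_add a b \<in> alg_A x1"
  unfolding alg_A_def by (rule cstar_gen.add)

lemma alg_A_scale: "a \<in> alg_A x1 \<Longrightarrow> mat_scale c a \<in> alg_A x1"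
  unfolding alg_A_def by (rule cstar_gen.scale)

lemma alg_A_mult: "a \<in> alg_A x1 \<Longrightarrow> b \<in> alg_A x1 \<Longrightarrow> mat_mult a b \<in> alg_A x1"
  unfolding alg_A_def by (rule cstar_gen.mult)

lemma alg_A_adj: "a \<in> alg_A x1 \<Longrightarrow> mat_adj a \<in> alg_A x1"
  unfolding alg_A_def by (rule cstar_gen.adj)

lemma alg_A_mat_id: "mat_id \<in> alg_A x1"
  using alg_A_multMp[of "\<lambda>_. 1" x1] by (simp add: multMp_def mat_id_def)

lemma alg_A_mat_pow: "a \<in> alg_A x1 \<Longrightarrow> mat_pow a n \<in> alg_A x1"
  by (induction n) (simp_all add: alg_A_mat_id alg_A_mult)

lemma alg_A_diag_unit: "diag_mat (\<lambda>i. if i = k then 1 else 0) \<in> alg_A x1"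
proof (induction k)
  case 0
  have adj: "mat_adj shiftU i j = (if j = i + 1 then 1 else 0)" for i j by (simp add: mat_adj_def shiftU_def)
  have "mat_add mat_id (mat_scale (-1) (mat_mult shiftU (mat_adj shiftU))) = diag_mat (\<lambda>i. if i = 0 then 1 else 0)"
    by (auto simp: fun_eq_iff mat_add_def mat_scale_def mat_mult_shiftU_left adj mat_id_def diag_mat_def)
  moreover have "mat_add mat_id (mat_scale (-1) (mat_mult shiftU (mat_adj shiftU))) \<in> alg_A x1"
    by (intro alg_A_add alg_A_mat_id alg_A_scale alg_A_mult alg_A_shiftU alg_A_adj)
  ultimately show ?case by simp
next
  case (Suc k)
  have "mat_mult (mat_mult shiftU (diag_mat (\<lambda>i. if i = k then 1 else 0))) (mat_adj shiftU)
      = diag_mat (\<lambda>i. if i = Suc k then 1 else 0)"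
    by (auto simp: fun_eq_iff mat_mult_shiftU_left mat_mult_adj_shiftU_right diag_mat_def)
  moreover have "mat_mult (mat_mult shiftU (diag_mat (\<lambda>i. if i = k then 1 else 0))) (mat_adj shiftU) \<in> alg_A x1"
    by (intro alg_A_mult alg_A_shiftU alg_A_adj Suc)
  ultimately show ?case by simp
qed

lemma alg_A_diag_truncation: "diag_mat (\<lambda>i. if i < N then \<alpha> i else 0) \<in> alg_A x1"
proof (induction N)
  case 0
  have "mat_scale 0 mat_id = diag_mat (\<lambda>i::nat. if i < 0 then \<alpha> i else 0)"
    by (simp add: fun_eq_iff mat_scale_def mat_id_def diag_mat_def)
  then show ?case using alg_A_scale[OF alg_A_mat_id, of 0 x1] by simp
next
  case (Suc N)
  have "mat_add (diag_mat (\<lambda>i. if i < N then \<alpha> i else 0)) (mat_scale (\<alpha> N) (diag_mat (\<lambda>i. if i = N then 1 else 0)))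
        = diag_mat (\<lambda>i. if i < Suc N then \<alpha> i else 0)"
    by (auto simp: fun_eq_iff mat_add_def mat_scale_def diag_mat_def)
  moreover have "mat_add (diag_mat (\<lambda>i. if i < N then \<alpha> i else 0))
      (mat_scale (\<alpha> N) (diag_mat (\<lambda>i. if i = N then 1 else 0))) \<in> alg_A x1"
    by (intro alg_A_add Suc alg_A_scale alg_A_diag_unit)
  ultimately show ?case by simp
qed

lemma alg_A_diag_null:
  assumes \<alpha>: "\<alpha> \<longlonglongrightarrow> 0"
  shows "diag_mat \<alpha> \<in> alg_A x1"
proof -
  have "bounded (range \<alpha>)" using \<alpha> by (rule convergent_imp_bounded)
  then have bounded: "bounded_mat (diag_mat \<alpha>)" by (rule bounded_mat_diag_mat)
  have "(\<lambda>N. opnorm (\<lambda>i j. diag_mat (\<lambda>i. if i < N then \<alpha> i else 0) i j - diag_mat \<alpha> i j)) \<longlonglongrightarrow> 0"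
  proof (rule LIMSEQ_I)
    fix r :: real assume r: "r > 0"
    obtain N0 where N0: "\<forall>n\<ge>N0. norm (\<alpha> n) < r / 2" using LIMSEQ_D[OF \<alpha>, of "r / 2"] r by auto
    have "norm (opnorm (\<lambda>i j. diag_mat (\<lambda>i. if i < N then \<alpha> i else 0) i j - diag_mat \<alpha> i j)) < r"
      if "N \<ge> N0" for N
    proof -
      have eq: "(\<lambda>i j. diag_mat (\<lambda>i. if i < N then \<alpha> i else 0) i j - diag_mat \<alpha> i j)
          = diag_mat (\<lambda>i. if i < N then 0 else - \<alpha> i)"
        by (auto simp: fun_eq_iff diag_mat_def)
      have "cmod (if i < N then 0 else - \<alpha> i) \<le> r / 2" for i
        using N0 that r by (auto intro: less_imp_le)
      then show ?thesis unfolding eq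
        using diag_mat_bounded[of "\<lambda>i. if i < N then 0 else - \<alpha> i" "r / 2"] r opnorm_nonneg by force
    qed
    then show "\<exists>N0. \<forall>N\<ge>N0. norm (opnorm (\<lambda>i j. diag_mat (\<lambda>i. if i < N then \<alpha> i else 0) i j - diag_mat \<alpha> i j) - 0) < r"
      by auto
  qed
  then show ?thesis unfolding alg_A_def
    by (intro cstar_gen.lim[OF _ bounded]) (rule alg_A_diag_truncation[unfolded alg_A_def])
qed

lemma alg_B_shiftV: "shiftV \<in> alg_B x1"
  unfolding alg_B_def by (rule cstar_gen.gen) simp

lemma alg_B_multM: "continuous_on UNIV f \<Longrightarrow> multM x1 f \<in> alg_B x1"
  unfolding alg_B_def by (rule cstar_gen.gen) auto

lemma alg_B_mult: "a \<in> alg_B x1 \<Longrightarrow> b \<in> alg_B x1 \<Longrightarrow> mat_mult a b \<in> alg_B x1"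
  unfolding alg_B_def by (rule cstar_gen.mult)

lemma alg_B_adj: "a \<in> alg_B x1 \<Longrightarrow> mat_adj a \<in> alg_B x1"
  unfolding alg_B_def by (rule cstar_gen.adj)

lemma alg_B_mat_pow: "a \<in> alg_B x1 \<Longrightarrow> mat_pow a n \<in> alg_B x1"
proof (induction n)
  case 0
  show ?case using alg_B_multM[of "\<lambda>_. 1" x1] by (simp add: multM_def mat_id_def)
qed (simp add: alg_B_mult)

section \<open>Diagonals of elements of \<open>A\<close> and \<open>B\<close>\<close>

context sampling
begin

lemma sampled_band_shiftV: "sampled_band shiftV"
  by (rule sampled_band_eventually_const[where N=1 and c="\<lambda>n. if n = 1 then 1 else 0"])
    (auto simp: band_def shiftV_def)

lemma sampled_band_multM: "continuous_on UNIV f \<Longrightarrow> sampled_band (multM x1 f)"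
  unfolding multM_def by (intro sampled_band_diag_mat samples_of_continuous)

lemma sampled_band_zero_ext_shiftU:
  assumes "\<And>n. eventually (\<lambda>k. 0 \<le> k + n) F"
  shows "sampled_band (zero_ext shiftU)"
proof (rule sampled_band_eventually_const[where N=1 and c="\<lambda>n. if n = 1 then 1 else 0"])
  show "band 1 (zero_ext shiftU)" by (auto simp: band_def zero_ext_def shiftU_def)
  show "eventually (\<lambda>k. zero_ext shiftU (k + n) k = (if n = 1 then 1 else 0)) F" for n
    using eventually_conj[OF assms[of 0] assms[of n]] by eventually_elim (auto simp: zero_ext_def shiftU_def)
qed

lemma sampled_band_zero_ext_multMp:
  assumes "\<And>n. eventually (\<lambda>k. 0 \<le> k + n) F" and f: "continuous_on UNIV f"
  shows "sampled_band (zero_ext (multMp x1 f))"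
proof -
  have "zero_ext (multMp x1 f) = diag_mat (\<lambda>l. if 0 \<le> l then f (intmul l x1) else 0)"
    by (auto simp: fun_eq_iff zero_ext_def multMp_def diag_mat_def eq_nat_nat_iff)
  moreover have "eventually (\<lambda>l. (if 0 \<le> l then f (intmul l x1) else 0) = f (intmul l x1)) F"
    using assms(1)[of 0] by eventually_elim simp
  then have "(\<lambda>l. if 0 \<le> l then f (intmul l x1) else 0) \<in> samples"
    by (rule samples_eventually_eq[OF _ samples_of_continuous[OF f]])
  ultimately show ?thesis by (simp add: sampled_band_diag_mat)
qed

end

lemma alg_B_diagonal_samples:
  assumes cpt: "compact (UNIV :: 'g::topological_ab_group_add set)"
    and dense: "closure (range (\<lambda>n::int. intmul n x1)) = (UNIV :: 'g set)"
    and b: "b \<in> alg_B x1"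
  shows "(\<lambda>k. b (k + n) k) \<in> sampling.samples x1 (principal UNIV)"
proof -
  interpret sampling x1 "principal UNIV" by (rule sampling_principal_UNIV[OF cpt dense])
  have "norm_approx sampled_band b"
    using b unfolding alg_B_def
  proof (rule cstar_gen_norm_approx)
    fix g assume "g \<in> insert shiftV {multM x1 f |f. continuous_on UNIV f}"
    then show "norm_approx sampled_band g"
      using shiftV_bounded sampled_band_shiftV bounded_mat_multM[OF cpt] sampled_band_multM
      by (auto intro: norm_approx_self)
  qed (fact sampled_band_add sampled_band_scale sampled_band_mult sampled_band_adj)+
  then show ?thesis
    by (rule norm_approx_diagonal_samples[where E="\<lambda>m. m"]) (simp_all add: norm_entry_le_opnorm)
qed

lemma alg_A_diagonal_samples:
  assumes cpt: "compact (UNIV :: 'g::topological_ab_group_add set)"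
    and dense: "closure (range (\<lambda>n::int. intmul n x1)) = (UNIV :: 'g set)"
    and a: "a \<in> alg_A x1"
  shows "(\<lambda>k. zero_ext a (k + n) k) \<in> sampling.samples x1 at_top"
proof -
  interpret sampling x1 at_top by (rule sampling_at_top[OF cpt dense])
  have nonneg: "eventually (\<lambda>k. 0 \<le> k + n) at_top" for n :: int
    using eventually_ge_at_top[of "- n"] by eventually_elim simp
  have "norm_approx (\<lambda>b. sampled_band (zero_ext b)) a"
    using a unfolding alg_A_def
  proof (rule cstar_gen_norm_approx)
    fix g assume "g \<in> insert shiftU {multMp x1 f |f. continuous_on UNIV f}"
    then show "norm_approx (\<lambda>b. sampled_band (zero_ext b)) g"
      using shiftU_bounded sampled_band_zero_ext_shiftU[OF nonneg]
        bounded_mat_multMp[OF cpt] sampled_band_zero_ext_multMp[OF nonneg]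
      by (auto intro: norm_approx_self)
  qed (simp_all add: zero_ext_add zero_ext_scale zero_ext_mult zero_ext_adj
        sampled_band_add sampled_band_scale sampled_band_mult sampled_band_adj)
  then show ?thesis
    by (rule norm_approx_diagonal_samples) (simp_all add: norm_zero_ext_le_opnorm zero_ext_diff)
qed

section \<open>Spectral subspaces\<close>

lemma lower_diagonal_nat_mat:
  assumes "\<And>i j. a i j \<noteq> 0 \<Longrightarrow> i = j + m"
  shows "a = mat_mult (mat_pow shiftU m) (diag_mat (\<lambda>k. a (k + m) k))"
proof (intro ext)
  fix i j show "a i j = mat_mult (mat_pow shiftU m) (diag_mat (\<lambda>k. a (k + m) k)) i j"
    using assms[of i j] by (cases "a i j = 0") (auto simp: mat_mult_pow_shiftU_left diag_mat_def)
qed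

lemma upper_diagonal_nat_mat:
  assumes "\<And>i j. a i j \<noteq> 0 \<Longrightarrow> j = i + m"
  shows "a = mat_mult (diag_mat (\<lambda>k. a k (k + m))) (mat_pow (mat_adj shiftU) m)"
proof (intro ext)
  fix i j show "a i j = mat_mult (diag_mat (\<lambda>k. a k (k + m))) (mat_pow (mat_adj shiftU) m) i j"
    using assms[of i j] by (cases "a i j = 0") (auto simp: mat_mult_pow_adj_shiftU_right diag_mat_def)
qed

lemma lower_diagonal_int_mat:
  assumes "\<And>i j. a i j \<noteq> 0 \<Longrightarrow> i = j + int m"
  shows "a = mat_mult (mat_pow shiftV m) (diag_mat (\<lambda>k. a (k + int m) k))"
proof (intro ext)
  fix i j show "a i j = mat_mult (mat_pow shiftV m) (diag_mat (\<lambda>k. a (k + int m) k)) i j"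
    using assms[of i j] by (cases "a i j = 0") (auto simp: mat_mult_pow_shiftV_left diag_mat_def)
qed

lemma upper_diagonal_int_mat:
  assumes "\<And>i j. a i j \<noteq> 0 \<Longrightarrow> j = i + int m"
  shows "a = mat_mult (diag_mat (\<lambda>k. a k (k + int m))) (mat_pow (mat_adj shiftV) m)"
proof (intro ext)
  fix i j show "a i j = mat_mult (diag_mat (\<lambda>k. a k (k + int m))) (mat_pow (mat_adj shiftV) m) i j"
    using assms[of i j] by (cases "a i j = 0") (auto simp: mat_mult_pow_adj_shiftV_right diag_mat_def)
qed

lemma cis_eigen_entry_iff:
  fixes p q r :: real
  shows "(\<forall>\<theta>. cis (\<theta> * p) * z * cis (- \<theta> * q) = cis (r * \<theta>) * z) \<longleftrightarrow> (z \<noteq> 0 \<longrightarrow> p - q = r)"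
proof
  assume H: "\<forall>\<theta>. cis (\<theta> * p) * z * cis (- \<theta> * q) = cis (r * \<theta>) * z"
  show "z \<noteq> 0 \<longrightarrow> p - q = r"
  proof (rule impI, rule ccontr)
    assume z: "z \<noteq> 0" and "p - q \<noteq> r"
    then have d: "p - q - r \<noteq> 0" by simp
    define \<theta> where "\<theta> = pi / (p - q - r)"
    have "cis (\<theta> * p) * cis (- \<theta> * q) * z = cis (r * \<theta>) * z"
      using H[rule_format, of \<theta>] by (simp add: mult_ac)
    then have "cis (\<theta> * p) * cis (- \<theta> * q) = cis (r * \<theta>)" using z by simp
    then have "cis (\<theta> * p + - \<theta> * q) = cis (r * \<theta>)" by (simp add: cis_mult)
    then have "cis (\<theta> * p + - \<theta> * q) / cis (r * \<theta>) = 1" by simp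
    then have "cis (\<theta> * (p - q - r)) = 1" by (simp add: cis_divide algebra_simps)
    then have "cis pi = 1" using d by (simp add: \<theta>_def)
    then show False by simp
  qed
next
  assume pq: "z \<noteq> 0 \<longrightarrow> p - q = r"
  show "\<forall>\<theta>. cis (\<theta> * p) * z * cis (- \<theta> * q) = cis (r * \<theta>) * z"
  proof (cases "z = 0")
    case False
    then have "p - q = r" using pq by simp
    then have "cis (\<theta> * p) * cis (- \<theta> * q) = cis (r * \<theta>)" for \<theta>
      by (simp add: cis_mult algebra_simps flip: \<open>p - q = r\<close>)
    then show ?thesis by (metis mult.commute mult.left_commute)
  qed simp
qed

lemma gauge_eigen_iff:
  fixes a :: "'i mat" and \<iota> :: "'i \<Rightarrow> real"
  shows "(\<forall>\<theta>. (\<lambda>i j. cis (\<theta> * \<iota> i) * a i j * cis (- \<theta> * \<iota> j)) = mat_scale (cis (r * \<theta>)) a)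
    \<longleftrightarrow> (\<forall>i j. a i j \<noteq> 0 \<longrightarrow> \<iota> i - \<iota> j = r)"
proof -
  have "(\<forall>\<theta>. (\<lambda>i j. cis (\<theta> * \<iota> i) * a i j * cis (- \<theta> * \<iota> j)) = mat_scale (cis (r * \<theta>)) a)
      \<longleftrightarrow> (\<forall>i j. \<forall>\<theta>. cis (\<theta> * \<iota> i) * a i j * cis (- \<theta> * \<iota> j) = cis (r * \<theta>) * a i j)"
    by (auto simp: fun_eq_iff mat_scale_def)
  then show ?thesis by (simp only: cis_eigen_entry_iff)
qed

lemma spectral_A_iff: "spectral_A x1 n = {a \<in> alg_A x1. \<forall>i j. a i j \<noteq> 0 \<longrightarrow> int i - int j = n}"
proof -
  have rhoK: "rhoK \<theta> a = (\<lambda>i j. cis (\<theta> * real i) * a i j * cis (- \<theta> * real j))" for \<theta> a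
    unfolding rhoK_def by (simp add: fun_eq_iff mat_mult_diag_left mat_mult_diag_right)
  have "real i - real j = real_of_int n \<longleftrightarrow> int i - int j = n" for i j :: nat
    using of_int_eq_iff[of "int i - int j" n, where 'a=real] by simp
  then show ?thesis unfolding spectral_A_def rhoK gauge_eigen_iff by simp
qed

lemma spectral_B_iff: "spectral_B x1 n = {b \<in> alg_B x1. \<forall>i j. b i j \<noteq> 0 \<longrightarrow> i - j = n}"
proof -
  have rhoL: "rhoL \<theta> b = (\<lambda>i j. cis (\<theta> * real_of_int i) * b i j * cis (- \<theta> * real_of_int j))" for \<theta> b
    unfolding rhoL_def by (simp add: fun_eq_iff mat_mult_diag_left mat_mult_diag_right)
  have "real_of_int i - real_of_int j = real_of_int n \<longleftrightarrow> i - j = n" for i j :: int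
    using of_int_eq_iff[of "i - j" n, where 'a=real] by simp
  then show ?thesis unfolding spectral_B_def rhoL gauge_eigen_iff by simp
qed

lemma spectral_A_nonneg:
  fixes x1 :: "'g::topological_ab_group_add"
  assumes cpt: "compact (UNIV :: 'g set)" and dense: "closure (range (\<lambda>n::int. intmul n x1)) = UNIV"
  shows "spectral_A x1 (int m) = {mat_mult (mat_pow shiftU m) (mat_add (diag_mat \<alpha>) (multMp x1 f)) | \<alpha> f.
           \<alpha> \<longlonglongrightarrow> 0 \<and> continuous_on UNIV f}" (is "_ = ?R")
proof (intro equalityI subsetI)
  fix a assume "a \<in> spectral_A x1 (int m)"
  then have a: "a \<in> alg_A x1" and supp0: "\<forall>i j. a i j \<noteq> 0 \<longrightarrow> int i - int j = int m"
    by (simp_all add: spectral_A_iff)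
  have supp: "i = j + m" if "a i j \<noteq> 0" for i j
    using supp0[rule_format, OF that] by linarith
  have diag_eq: "zero_ext a (int k + int m) (int k) = a (k + m) k" for k
    by (simp add: zero_ext_def flip: of_nat_add)
  obtain \<alpha> g where \<alpha>: "\<alpha> \<longlonglongrightarrow> 0" and g: "continuous_on UNIV g"
    and diag: "\<And>k. a (k + m) k = \<alpha> k + g (intmul (int k) x1)"
    using samples_at_top_decomp[OF sampling_at_top[OF cpt dense] alg_A_diagonal_samples[OF cpt dense a] diag_eq]
    by blast
  have "a = mat_mult (mat_pow shiftU m) (diag_mat (\<lambda>k. a (k + m) k))"
    using supp by (rule lower_diagonal_nat_mat)
  also have "diag_mat (\<lambda>k. a (k + m) k) = mat_add (diag_mat \<alpha>) (multMp x1 g)"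
    by (simp add: fun_eq_iff diag_mat_def mat_add_def multMp_def diag)
  finally show "a \<in> ?R" using \<alpha> g by blast
next
  fix a assume "a \<in> ?R"
  then obtain \<alpha> f where a: "a = mat_mult (mat_pow shiftU m) (mat_add (diag_mat \<alpha>) (multMp x1 f))"
    and \<alpha>: "\<alpha> \<longlonglongrightarrow> 0" and f: "continuous_on UNIV f" by blast
  have "a \<in> alg_A x1"
    unfolding a by (intro alg_A_mult alg_A_mat_pow alg_A_shiftU alg_A_add alg_A_diag_null \<alpha> alg_A_multMp f)
  moreover have "a i j \<noteq> 0 \<Longrightarrow> int i - int j = int m" for i j
    unfolding a by (auto simp: mat_mult_pow_shiftU_left mat_add_def diag_mat_def multMp_def split: if_splits)
  ultimately show "a \<in> spectral_A x1 (int m)" by (simp add: spectral_A_iff)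
qed

lemma spectral_A_neg:
  fixes x1 :: "'g::topological_ab_group_add"
  assumes cpt: "compact (UNIV :: 'g set)" and dense: "closure (range (\<lambda>n::int. intmul n x1)) = UNIV"
  shows "spectral_A x1 (- int m) = {mat_mult (mat_add (diag_mat \<alpha>) (multMp x1 f)) (mat_pow (mat_adj shiftU) m) | \<alpha> f.
           \<alpha> \<longlonglongrightarrow> 0 \<and> continuous_on UNIV f}" (is "_ = ?R")
proof (intro equalityI subsetI)
  fix a assume "a \<in> spectral_A x1 (- int m)"
  then have a: "a \<in> alg_A x1" and supp0: "\<forall>i j. a i j \<noteq> 0 \<longrightarrow> int i - int j = - int m"
    by (simp_all add: spectral_A_iff)
  have supp: "j = i + m" if "a i j \<noteq> 0" for i j
    using supp0[rule_format, OF that] by linarith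
  have "(\<lambda>k. zero_ext a (k + int m + - int m) (k + int m)) \<in> sampling.samples x1 at_top"
    by (rule sampling.samples_shift[OF sampling_at_top[OF cpt dense]
          alg_A_diagonal_samples[OF cpt dense a, of "- int m"]])
  then have upper: "(\<lambda>k. zero_ext a k (k + int m)) \<in> sampling.samples x1 at_top" by simp
  have diag_eq: "zero_ext a (int k) (int k + int m) = a k (k + m)" for k
    by (simp add: zero_ext_def flip: of_nat_add)
  obtain \<alpha> g where \<alpha>: "\<alpha> \<longlonglongrightarrow> 0" and g: "continuous_on UNIV g"
    and diag: "\<And>k. a k (k + m) = \<alpha> k + g (intmul (int k) x1)"
    using samples_at_top_decomp[OF sampling_at_top[OF cpt dense] upper diag_eq] by blast
  have "a = mat_mult (diag_mat (\<lambda>k. a k (k + m))) (mat_pow (mat_adj shiftU) m)"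
    using supp by (rule upper_diagonal_nat_mat)
  also have "diag_mat (\<lambda>k. a k (k + m)) = mat_add (diag_mat \<alpha>) (multMp x1 g)"
    by (simp add: fun_eq_iff diag_mat_def mat_add_def multMp_def diag)
  finally show "a \<in> ?R" using \<alpha> g by blast
next
  fix a assume "a \<in> ?R"
  then obtain \<alpha> f where a: "a = mat_mult (mat_add (diag_mat \<alpha>) (multMp x1 f)) (mat_pow (mat_adj shiftU) m)"
    and \<alpha>: "\<alpha> \<longlonglongrightarrow> 0" and f: "continuous_on UNIV f" by blast
  have "a \<in> alg_A x1"
    unfolding a by (intro alg_A_mult alg_A_mat_pow alg_A_adj alg_A_shiftU alg_A_add alg_A_diag_null \<alpha> alg_A_multMp f)
  moreover have "a i j \<noteq> 0 \<Longrightarrow> int i - int j = - int m" for i j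
    unfolding a by (auto simp: mat_mult_pow_adj_shiftU_right mat_add_def diag_mat_def multMp_def split: if_splits)
  ultimately show "a \<in> spectral_A x1 (- int m)" by (simp add: spectral_A_iff)
qed

lemma spectral_B_nonneg:
  fixes x1 :: "'g::topological_ab_group_add"
  assumes cpt: "compact (UNIV :: 'g set)" and dense: "closure (range (\<lambda>n::int. intmul n x1)) = UNIV"
  shows "spectral_B x1 (int m) = {mat_mult (mat_pow shiftV m) (multM x1 f) | f. continuous_on UNIV f}"
    (is "_ = ?R")
proof (intro equalityI subsetI)
  fix b assume "b \<in> spectral_B x1 (int m)"
  then have b: "b \<in> alg_B x1" and supp0: "\<forall>i j. b i j \<noteq> 0 \<longrightarrow> i - j = int m"
    by (simp_all add: spectral_B_iff)
  have supp: "i = j + int m" if "b i j \<noteq> 0" for i j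
    using supp0[rule_format, OF that] by linarith
  obtain g where g: "continuous_on UNIV g" and diag: "(\<lambda>k. b (k + int m) k) = (\<lambda>k. g (intmul k x1))"
    using sampling_principal_UNIV[OF cpt dense] alg_B_diagonal_samples[OF cpt dense b]
    by (rule samples_principal_UNIV)
  have "b = mat_mult (mat_pow shiftV m) (diag_mat (\<lambda>k. b (k + int m) k))"
    using supp by (rule lower_diagonal_int_mat)
  then show "b \<in> ?R" using g by (auto simp: diag multM_def)
next
  fix b assume "b \<in> ?R"
  then obtain f where b: "b = mat_mult (mat_pow shiftV m) (multM x1 f)" and f: "continuous_on UNIV f"
    by blast
  have "b \<in> alg_B x1" unfolding b by (intro alg_B_mult alg_B_mat_pow alg_B_shiftV alg_B_multM f)
  moreover have "b i j \<noteq> 0 \<Longrightarrow> i - j = int m" for i j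
    unfolding b by (auto simp: mat_mult_pow_shiftV_left diag_mat_def multM_def split: if_splits)
  ultimately show "b \<in> spectral_B x1 (int m)" by (simp add: spectral_B_iff)
qed

lemma spectral_B_neg:
  fixes x1 :: "'g::topological_ab_group_add"
  assumes cpt: "compact (UNIV :: 'g set)" and dense: "closure (range (\<lambda>n::int. intmul n x1)) = UNIV"
  shows "spectral_B x1 (- int m) = {mat_mult (multM x1 f) (mat_pow (mat_adj shiftV) m) | f. continuous_on UNIV f}"
    (is "_ = ?R")
proof (intro equalityI subsetI)
  fix b assume "b \<in> spectral_B x1 (- int m)"
  then have b: "b \<in> alg_B x1" and supp0: "\<forall>i j. b i j \<noteq> 0 \<longrightarrow> i - j = - int m"
    by (simp_all add: spectral_B_iff)
  have supp: "j = i + int m" if "b i j \<noteq> 0" for i j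
    using supp0[rule_format, OF that] by linarith
  have "(\<lambda>k. b (k + int m + - int m) (k + int m)) \<in> sampling.samples x1 (principal UNIV)"
    by (rule sampling.samples_shift[OF sampling_principal_UNIV[OF cpt dense]
          alg_B_diagonal_samples[OF cpt dense b]])
  then have "(\<lambda>k. b k (k + int m)) \<in> sampling.samples x1 (principal UNIV)" by simp
  then obtain g where g: "continuous_on UNIV g" and diag: "(\<lambda>k. b k (k + int m)) = (\<lambda>k. g (intmul k x1))"
    using samples_principal_UNIV[OF sampling_principal_UNIV[OF cpt dense]] by blast
  have "b = mat_mult (diag_mat (\<lambda>k. b k (k + int m))) (mat_pow (mat_adj shiftV) m)"
    using supp by (rule upper_diagonal_int_mat)
  then show "b \<in> ?R" using g by (auto simp: diag multM_def)
next
  fix b assume "b \<in> ?R"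
  then obtain f where b: "b = mat_mult (multM x1 f) (mat_pow (mat_adj shiftV) m)" and f: "continuous_on UNIV f"
    by blast
  have "b \<in> alg_B x1" unfolding b by (intro alg_B_mult alg_B_mat_pow alg_B_adj alg_B_shiftV alg_B_multM f)
  moreover have "b i j \<noteq> 0 \<Longrightarrow> i - j = - int m" for i j
    unfolding b by (auto simp: mat_mult_pow_adj_shiftV_right diag_mat_def multM_def split: if_splits)
  ultimately show "b \<in> spectral_B x1 (- int m)" by (simp add: spectral_B_iff)
qed

theorem proposition2p10:
  fixes x1 :: "'g::{topological_ab_group_add, t2_space}"
  assumes "compact (UNIV :: 'g set)"
    and "infinite (UNIV :: 'g set)"
    and "closure (range (\<lambda>n::int. intmul n x1)) = UNIV"
  shows "\<forall>n::int.
     (n \<ge> 0 \<longrightarrow> spectral_A x1 n =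
        {mat_mult (mat_pow shiftU (nat n)) (mat_add (diag_mat \<alpha>) (multMp x1 f)) | \<alpha> f.
           \<alpha> \<longlonglongrightarrow> 0 \<and> continuous_on UNIV f})
   \<and> (n < 0 \<longrightarrow> spectral_A x1 n =
        {mat_mult (mat_add (diag_mat \<alpha>) (multMp x1 f)) (mat_pow (mat_adj shiftU) (nat (- n))) | \<alpha> f.
           \<alpha> \<longlonglongrightarrow> 0 \<and> continuous_on UNIV f})
   \<and> (n \<ge> 0 \<longrightarrow> spectral_B x1 n =
        {mat_mult (mat_pow shiftV (nat n)) (multM x1 f) | f. continuous_on UNIV f})
   \<and> (n < 0 \<longrightarrow> spectral_B x1 n =
        {mat_mult (multM x1 f) (mat_pow (mat_adj shiftV) (nat (- n))) | f. continuous_on UNIV f})"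
  apply (intro allI conjI impI)
  subgoal for n using spectral_A_nonneg[OF assms(1,3), of "nat n"] by simp
  subgoal for n using spectral_A_neg[OF assms(1,3), of "nat (- n)"] by simp
  subgoal for n using spectral_B_nonneg[OF assms(1,3), of "nat n"] by simp
  subgoal for n using spectral_B_neg[OF assms(1,3), of "nat (- n)"] by simp
  done

end
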